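(* Let $\rho>0$, $M\ge N$, $\hat P=\sum_{i=1}^{n_{\hat P}}\hat p_i\delta_{\hat\xi_i}$ on $X=\mathbb R^n$, $c(x,y)=\|x-y\|$ for a norm $\|\cdot\|$ on $\mathbb R^n$, and $\ell(x)=\min_{(a,b)\in\mathcal H}(a^\top x+b)$ for a polytope $\mathcal H\subseteq(\mathbb R^n)^N\times\mathbb R$. Then $U^{\mathrm{sym}}_M(\ell)$ equals the infimum of $$\mu M\rho+\sum_{\iota\in\hat{\mathcal I}}\hat p_\iota\sigma_\iota$$ over variables $\mu\ge0$, $\sigma_\iota\in\mathbb R$, $z_\iota=(z^j_\iota)_{j=1}^M\in(\mathbb R^n)^M$, $b_{l,\iota}\in\mathbb R$, $a_{l,\iota}\in(\mathbb R^n)^N$ ($l\in\mathcal L$, $\iota\in\hat{\mathcal I}$) subject to, for all $l\in\mathcal L$, $\iota\in\hat{\mathcal I}$, $j=1,\dots,M$: $$0\le\sigma_\iota+z_\iota^\top\hat\xi_{\upsilon(\iota)}+\tfrac{(M-N)!}{M!}\textstyle\sum_{l\in\mathcal L}b_{l,\iota},\quad \|z^j_\iota\|_*\le\mu,\quad z_\iota=\tfrac{(M-N)!}{M!}\textstyle\sum_{l\in\mathcal L}E_l^\top a_{l,\iota},\quad (a_{l,\iota},b_{l,\iota})\in-\mathcal H.$$ The optimal value does not depend on the choice of the selector $\upsilon$.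
   Context: $c^M(x,y)=\sum_{i\le M}c(x_i,y_i)$; $\mathbb B^{c^M}_{M\rho}(\hat P^{\otimes M})$ is the set of Borel probability measures on $(\mathbb R^n)^M$ with finite first moment and optimal transport cost $W_{c^M}(\cdot,\hat P^{\otimes M})\le M\rho$; $\mathrm{pr}^M_{1:N}$ projects onto the first $N$ blocks; $g_{\mathrm{sym}}=\frac1{M!}\sum_{\pi\in\mathcal S_M}g\circ\pi$ with $\pi(x)=(x_{\pi(1)},\dots,x_{\pi(M)})$; $U^{\mathrm{sym}}_M(\ell)=\sup_{\bar P\in\mathbb B^{c^M}_{M\rho}(\hat P^{\otimes M})}\mathbb E_{\bar P}(\ell\circ\mathrm{pr}^M_{1:N})_{\mathrm{sym}}$. $\mathcal L=\{l\in\{1,\dots,M\}^N: l_k\ne l_{k'}\text{ for }k\ne k'\}$; $E_l\in\mathbb R^{nN\times nM}$ is the selection matrix with $E_lx=(x_{l_1},\dots,x_{l_N})$. $\hat I=\{1,\dots,n_{\hat P}\}^M$; $\mathbf i\sim\mathbf j$ iff $\mathbf i_k=\mathbf j_{\pi(k)}$ for all $k$ for some $\pi\in\mathcal S_M$; $\hat{\mathcal I}=\hat I/\!\sim$; $\upsilon:\hat{\mathcal I}\to\hat I$ is any fixed map with $\upsilon(\iota)\in\iota$; $\hat\xi_{\mathbf i}=(\hat\xi_{\mathbf i_1},\dots,\hat\xi_{\mathbf i_M})$; $\hat p_\iota=\sum_{\mathbf i\in\iota}\prod_{k=1}^M\hat p_{\mathbf i_k}$. $\|\cdot\|_*$ is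 the dual norm; $z_\iota^\top\hat\xi$ is the Euclidean inner product on $(\mathbb R^n)^M$. *)

theory Defs
  imports "HOL-Analysis.Analysis" "HOL-Probability.Probability" "HOL-Combinatorics.Permutations"
begin

(* A point of (R^n)^K is represented as a function x :: nat \<Rightarrow> real^'n,
   extensional on the block index set {..<K} (0-based). *)
definition blocks :: "nat \<Rightarrow> (nat \<Rightarrow> 'b) set" where
  "blocks K = PiE {..<K} (\<lambda>_. UNIV)"

definition is_norm :: "(real^'n \<Rightarrow> real) \<Rightarrow> bool" where
  "is_norm nrm \<longleftrightarrow> (\<forall>x y. nrm (x + y) \<le> nrm x + nrm y)
      \<and> (\<forall>c x. nrm (c *\<^sub>R x) = \<bar>c\<bar> * nrm x)
      \<and> (\<forall>x. nrm x = 0 \<longleftrightarrow> x = 0)"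

definition dual_norm :: "(real^'n \<Rightarrow> real) \<Rightarrow> real^'n \<Rightarrow> real" where
  "dual_norm nrm z = (SUP x\<in>{x. nrm x \<le> 1}. z \<bullet> x)"

definition is_polytope :: "nat \<Rightarrow> ((nat \<Rightarrow> real^'n) \<times> real) set \<Rightarrow> bool" where
  "is_polytope N H \<longleftrightarrow> (\<exists>V. finite V \<and> V \<noteq> {} \<and> V \<subseteq> blocks N \<times> UNIV \<and>
     H = {((\<lambda>k. if k < N then (\<Sum>v\<in>V. w v *\<^sub>R fst v k) else undefined),
           (\<Sum>v\<in>V. w v * snd v)) | w. (\<forall>v\<in>V. 0 \<le> w v) \<and> (\<Sum>v\<in>V. w v) = 1})"

definition loss :: "nat \<Rightarrow> ((nat \<Rightarrow> real^'n) \<times> real) set \<Rightarrow> (nat \<Rightarrow> real^'n) \<Rightarrow> real" where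
  "loss N H x = (INF p\<in>H. (\<Sum>k<N. fst p k \<bullet> x k) + snd p)"

definition proj_first :: "nat \<Rightarrow> (nat \<Rightarrow> 'b) \<Rightarrow> nat \<Rightarrow> 'b" where
  "proj_first N x = restrict x {..<N}"

definition symmetrize :: "nat \<Rightarrow> ((nat \<Rightarrow> 'b) \<Rightarrow> real) \<Rightarrow> (nat \<Rightarrow> 'b) \<Rightarrow> real" where
  "symmetrize M g x = (1 / fact M) * (\<Sum>\<pi>\<in>{\<pi>. \<pi> permutes {..<M}}. g (restrict (\<lambda>k. x (\<pi> k)) {..<M}))"

definition blockspace :: "nat \<Rightarrow> (nat \<Rightarrow> real^'n) measure" where
  "blockspace M = PiM {..<M} (\<lambda>_. borel)"

definition discrete_measure :: "nat \<Rightarrow> (nat \<Rightarrow> real) \<Rightarrow> (nat \<Rightarrow> real^'n) \<Rightarrow> (real^'n) measure" where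
  "discrete_measure np p xi = measure_of UNIV (sets borel)
      (\<lambda>A. \<Sum>i\<in>{1..np}. ennreal (p i) * indicator A (xi i))"

definition costM :: "(real^'n \<Rightarrow> real) \<Rightarrow> nat \<Rightarrow> (nat \<Rightarrow> real^'n) \<Rightarrow> (nat \<Rightarrow> real^'n) \<Rightarrow> real" where
  "costM nrm M x y = (\<Sum>i<M. nrm (x i - y i))"

definition couplings :: "nat \<Rightarrow> (nat \<Rightarrow> real^'n) measure \<Rightarrow> (nat \<Rightarrow> real^'n) measure
     \<Rightarrow> ((nat \<Rightarrow> real^'n) \<times> (nat \<Rightarrow> real^'n)) measure set" where
  "couplings M P Q = {\<pi>. prob_space \<pi> \<and>
       sets \<pi> = sets (blockspace M \<Otimes>\<^sub>M blockspace M) \<and>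
       distr \<pi> (blockspace M) fst = P \<and> distr \<pi> (blockspace M) snd = Q}"

definition ot_cost :: "(real^'n \<Rightarrow> real) \<Rightarrow> nat \<Rightarrow> (nat \<Rightarrow> real^'n) measure \<Rightarrow> (nat \<Rightarrow> real^'n) measure \<Rightarrow> ennreal" where
  "ot_cost nrm M P Q = (INF \<pi>\<in>couplings M P Q. \<integral>\<^sup>+ xy. ennreal (costM nrm M (fst xy) (snd xy)) \<partial>\<pi>)"

definition finite_first_moment_probs :: "nat \<Rightarrow> (nat \<Rightarrow> real^'n) measure set" where
  "finite_first_moment_probs M = {P. prob_space P \<and> sets P = sets (blockspace M) \<and>
       (\<integral>\<^sup>+ x. ennreal (\<Sum>i<M. norm (x i)) \<partial>P) < \<infinity>}"

definition ot_ball :: "(real^'n \<Rightarrow> real) \<Rightarrow> nat \<Rightarrow> real \<Rightarrow> (nat \<Rightarrow> real^'n) measure \<Rightarrow> (nat \<Rightarrow> real^'n) measure set" where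
  "ot_ball nrm M r Q = {P \<in> finite_first_moment_probs M. ot_cost nrm M P Q \<le> ennreal r}"

definition U_sym :: "(real^'n \<Rightarrow> real) \<Rightarrow> nat \<Rightarrow> nat \<Rightarrow> real \<Rightarrow> nat \<Rightarrow> (nat \<Rightarrow> real) \<Rightarrow> (nat \<Rightarrow> real^'n)
      \<Rightarrow> ((nat \<Rightarrow> real^'n) \<Rightarrow> real) \<Rightarrow> ereal" where
  "U_sym nrm M N \<rho> np p xi l =
     (SUP P\<in>ot_ball nrm M (real M * \<rho>) (PiM {..<M} (\<lambda>_. discrete_measure np p xi)).
        ereal (\<integral>x. symmetrize M (\<lambda>y. l (proj_first N y)) x \<partial>P))"

definition Lset :: "nat \<Rightarrow> nat \<Rightarrow> (nat \<Rightarrow> nat) set" where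
  "Lset M N = {l \<in> PiE {..<N} (\<lambda>_. {..<M}). inj_on l {..<N}}"

(* E_l^T a : (R^n)^N \<rightarrow> (R^n)^M, the transpose of the selection E_l x = (x_{l_1},...,x_{l_N}) *)
definition selT :: "nat \<Rightarrow> nat \<Rightarrow> (nat \<Rightarrow> nat) \<Rightarrow> (nat \<Rightarrow> real^'n) \<Rightarrow> nat \<Rightarrow> real^'n" where
  "selT M N l a = (\<lambda>j. if j < M then (\<Sum>k\<in>{k. k < N \<and> l k = j}. a k) else undefined)"

definition Ihat :: "nat \<Rightarrow> nat \<Rightarrow> (nat \<Rightarrow> nat) set" where
  "Ihat M np = PiE {..<M} (\<lambda>_. {1..np})"

definition perm_equiv :: "nat \<Rightarrow> nat \<Rightarrow> ((nat \<Rightarrow> nat) \<times> (nat \<Rightarrow> nat)) set" where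
  "perm_equiv M np = {(i, j). i \<in> Ihat M np \<and> j \<in> Ihat M np \<and>
       (\<exists>\<pi>. \<pi> permutes {..<M} \<and> (\<forall>k<M. i k = j (\<pi> k)))}"

definition Icls :: "nat \<Rightarrow> nat \<Rightarrow> (nat \<Rightarrow> nat) set set" where
  "Icls M np = Ihat M np // perm_equiv M np"

definition p_cls :: "nat \<Rightarrow> (nat \<Rightarrow> real) \<Rightarrow> (nat \<Rightarrow> nat) set \<Rightarrow> real" where
  "p_cls M p \<iota> = (\<Sum>i\<in>\<iota>. \<Prod>k<M. p (i k))"

definition xi_tuple :: "nat \<Rightarrow> (nat \<Rightarrow> real^'n) \<Rightarrow> (nat \<Rightarrow> nat) \<Rightarrow> nat \<Rightarrow> real^'n" where
  "xi_tuple M xi i = restrict (\<lambda>k. xi (i k)) {..<M}"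

definition dual_values :: "(real^'n \<Rightarrow> real) \<Rightarrow> nat \<Rightarrow> nat \<Rightarrow> real \<Rightarrow> nat \<Rightarrow> (nat \<Rightarrow> real) \<Rightarrow> (nat \<Rightarrow> real^'n)
     \<Rightarrow> ((nat \<Rightarrow> real^'n) \<times> real) set \<Rightarrow> ((nat \<Rightarrow> nat) set \<Rightarrow> (nat \<Rightarrow> nat)) \<Rightarrow> ereal set" where
  "dual_values nrm M N \<rho> np p xi H \<upsilon> =
     {ereal (\<mu> * real M * \<rho> + (\<Sum>\<iota>\<in>Icls M np. p_cls M p \<iota> * \<sigma> \<iota>)) | \<mu> \<sigma> z a b.
        0 \<le> \<mu> \<and>
        (\<forall>\<iota>\<in>Icls M np.
           0 \<le> \<sigma> \<iota> + (\<Sum>j<M. z \<iota> j \<bullet> xi_tuple M xi (\<upsilon> \<iota>) j)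
                 + (fact (M - N) / fact M) * (\<Sum>l\<in>Lset M N. b l \<iota>)
         \<and> (\<forall>j<M. dual_norm nrm (z \<iota> j) \<le> \<mu>)
         \<and> z \<iota> = (\<lambda>j. if j < M then (fact (M - N) / fact M) *\<^sub>R (\<Sum>l\<in>Lset M N. selT M N l (a l \<iota>) j)
                       else undefined)
         \<and> (\<forall>l\<in>Lset M N. ((\<lambda>k. if k < N then - a l \<iota> k else undefined), - b l \<iota>) \<in> H))}"

end

theory Submission
  imports Defs
begin

text \<open>
  Weak duality: a feasible dual point bounds the symmetrized loss pointwise by
  \<open>\<mu> c(x, \<xi>\<^sub>i) + \<sigma>\<^sub>\<iota>\<close> at every atom \<open>\<xi>\<^sub>i\<close> of the nominal distribution, via the dual-norm
  inequality and the vertex description of the loss; integrating this against a near-optimal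
  coupling gives the bound on \<open>U\<^sup>s\<^sup>y\<^sup>m\<^sub>M\<close>.

  Strong duality: moving the atoms of each permutation class to a common configuration stays in
  the ball, so \<open>U\<^sup>s\<^sup>y\<^sup>m\<^sub>M\<close> dominates a concave program with one convex budget constraint. A Lagrange
  multiplier \<open>\<mu>\<close> (separating hyperplane in \<open>\<real>\<^sup>2\<close>) splits it into one unconstrained problem per
  class; writing the polytope loss as a minimum over convex weights on its vertices, Sion's minimax
  theorem exchanges that minimum with the supremum over perturbations, and the resulting
  weights are the dual variables \<open>(a, b)\<close>, with \<open>z\<close> and the dual-norm bound read off from
  boundedness of the resulting affine-minus-norm function.\<close>

section \<open>Sion's minimax theorem\<close>

definition comb_closed :: "(real \<Rightarrow> 'a \<Rightarrow> 'a \<Rightarrow> 'a) \<Rightarrow> 'a set \<Rightarrow> bool" where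
  "comb_closed comb C \<longleftrightarrow> (\<forall>a\<in>C. \<forall>b\<in>C. \<forall>t\<in>{0..1}. comb t a b \<in> C)"

lemma comb_closed_connected:
  fixes comb :: "real \<Rightarrow> 'a::topological_space \<Rightarrow> 'a \<Rightarrow> 'a"
  assumes "comb_closed comb C"
    and "\<And>a b. continuous_on {0..1} (\<lambda>t. comb t a b)"
    and "\<And>a b. comb 0 a b = a" and "\<And>a b. comb 1 a b = b"
  shows "connected C"
proof -
  have "path_connected C"
    unfolding path_connected_def
  proof (intro ballI)
    fix a b assume "a \<in> C" "b \<in> C"
    then show "\<exists>g. path g \<and> path_image g \<subseteq> C \<and> pathstart g = a \<and> pathfinish g = b"
      using assms unfolding path_def path_image_def pathstart_def pathfinish_def comb_closed_def
      by (intro exI[of _ "\<lambda>t. comb t a b"]) auto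
  qed
  then show ?thesis by (rule path_connected_imp_connected)
qed

lemma connected_subset_closed_Un:
  assumes "connected C" "C \<subseteq> A \<union> B" "closed A" "closed B" "A \<inter> B \<inter> C = {}"
  shows "C \<subseteq> A \<or> C \<subseteq> B"
  using assms unfolding connected_closed by blast

text \<open>
  Quasi-convexity and quasi-concavity are expressed through abstract combination operations, so
  that the theorem applies to weight functions and block configurations alike; the proof is
  Komiya's elementary one.\<close>

locale sion_minimax =
  fixes comb :: "real \<Rightarrow> 'a::topological_space \<Rightarrow> 'a \<Rightarrow> 'a"
    and combY :: "real \<Rightarrow> 'b \<Rightarrow> 'b \<Rightarrow> 'b"
    and f :: "'a \<Rightarrow> 'b \<Rightarrow> real"
  assumes comb_cont: "\<And>a b. continuous_on {0..1} (\<lambda>t. comb t a b)"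
    and comb0: "\<And>a b. comb 0 a b = a" and comb1: "\<And>a b. comb 1 a b = b"
    and combY0: "\<And>a b. combY 0 a b = a" and combY1: "\<And>a b. combY 1 a b = b"
    and f_cont: "\<And>y. continuous_on UNIV (\<lambda>x. f x y)"
    and f_quasiconvex: "\<And>y a b t. t \<in> {0..1} \<Longrightarrow> f (comb t a b) y \<le> max (f a y) (f b y)"
    and f_contY: "\<And>x y1 y2. continuous_on {0..1} (\<lambda>t. f x (combY t y1 y2))"
    and f_quasiconcave: "\<And>x y1 y2 t. t \<in> {0..1} \<Longrightarrow> min (f x y1) (f x y2) \<le> f x (combY t y1 y2)"
begin

lemma closed_sublevel: "closed {x. f x y \<le> \<beta>}"
  by (rule closed_Collect_le[OF f_cont continuous_on_const])

lemma comb_closed_sublevel: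
  assumes "comb_closed comb K" shows "comb_closed comb {x\<in>K. f x y \<le> \<beta>}"
  using assms f_quasiconvex unfolding comb_closed_def by (auto intro: order.trans[OF f_quasiconvex])

lemma connected_sublevel:
  assumes "comb_closed comb K" shows "connected {x\<in>K. f x y \<le> \<beta>}"
  by (rule comb_closed_connected[OF comb_closed_sublevel[OF assms] comb_cont comb0 comb1])

text \<open>
  A sublevel set that lies on one side at parameter \<open>t\<close> contains a point with value
  \<open>\<le> \<alpha> < \<beta>\<close>, and by continuity in \<open>t\<close> that point stays in the sublevel sets nearby,
  which forces them onto the same side.\<close>

lemma side_openin:
  assumes "\<alpha> < \<beta>"
    and low: "\<forall>t. \<exists>x\<in>K. f x (combY t y1 y2) \<le> \<alpha>"
    and sides: "\<forall>t\<in>{0..1}. {x\<in>K. f x (combY t y1 y2) \<le> \<beta>} \<subseteq> A \<or> {x\<in>K. f x (combY t y1 y2) \<le> \<beta>} \<subseteq> B"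
    and disj: "K \<inter> A \<inter> B = {}"
  shows "openin (top_of_set {0..1}) {t\<in>{0..1}. {x\<in>K. f x (combY t y1 y2) \<le> \<beta>} \<subseteq> A}"
  unfolding openin_euclidean_subtopology_iff
proof (intro conjI ballI)
  fix t assume t: "t \<in> {t\<in>{0..1}. {x\<in>K. f x (combY t y1 y2) \<le> \<beta>} \<subseteq> A}"
  obtain x where x: "x \<in> K" "f x (combY t y1 y2) \<le> \<alpha>" using low by blast
  with t \<open>\<alpha> < \<beta>\<close> have xA: "x \<in> A" by auto
  obtain d where d: "d > 0"
    "\<forall>s\<in>{0..1}. dist s t < d \<longrightarrow> dist (f x (combY s y1 y2)) (f x (combY t y1 y2)) < \<beta> - \<alpha>"
    using f_contY[of x y1 y2] t \<open>\<alpha> < \<beta>\<close> unfolding continuous_on_iff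
    by (metis (no_types, lifting) diff_gt_0_iff_gt mem_Collect_eq)
  show "\<exists>e>0. \<forall>s\<in>{0..1}. dist s t < e \<longrightarrow> s \<in> {t\<in>{0..1}. {x\<in>K. f x (combY t y1 y2) \<le> \<beta>} \<subseteq> A}"
  proof (intro exI[of _ d] conjI ballI impI d(1))
    fix s :: real assume s: "s \<in> {0..1}" "dist s t < d"
    then have "f x (combY s y1 y2) < \<beta>" using d x by (auto simp: dist_real_def)
    with x(1) have "x \<in> {x\<in>K. f x (combY s y1 y2) \<le> \<beta>}" by simp
    then have "{x\<in>K. f x (combY s y1 y2) \<le> \<beta>} \<subseteq> A"
      using sides s(1) x(1) xA disj by blast
    then show "s \<in> {t\<in>{0..1}. {x\<in>K. f x (combY t y1 y2) \<le> \<beta>} \<subseteq> A}"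
      using s(1) by simp
  qed
qed auto

lemma sublevel_on_one_side:
  assumes "comb_closed comb K" "t \<in> {0..1}"
    and disj: "K \<inter> {x. f x y1 \<le> \<beta>} \<inter> {x. f x y2 \<le> \<beta>} = {}"
  shows "{x\<in>K. f x (combY t y1 y2) \<le> \<beta>} \<subseteq> {x. f x y1 \<le> \<beta>}
       \<or> {x\<in>K. f x (combY t y1 y2) \<le> \<beta>} \<subseteq> {x. f x y2 \<le> \<beta>}"
proof (rule connected_subset_closed_Un[OF connected_sublevel[OF assms(1)] _ closed_sublevel closed_sublevel])
  show "{x\<in>K. f x (combY t y1 y2) \<le> \<beta>} \<subseteq> {x. f x y1 \<le> \<beta>} \<union> {x. f x y2 \<le> \<beta>}"
  proof
    fix x assume "x \<in> {x\<in>K. f x (combY t y1 y2) \<le> \<beta>}"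
    then show "x \<in> {x. f x y1 \<le> \<beta>} \<union> {x. f x y2 \<le> \<beta>}"
      using f_quasiconcave[OF assms(2), of x y1 y2] by (auto simp: min_def split: if_splits)
  qed
  show "{x. f x y1 \<le> \<beta>} \<inter> {x. f x y2 \<le> \<beta>} \<inter> {x\<in>K. f x (combY t y1 y2) \<le> \<beta>} = {}"
    using disj by blast
qed

text \<open>
  If every sublevel set at level \<open>\<alpha>\<close> along the path from \<open>y1\<close> to \<open>y2\<close> meets \<open>K\<close>, the sublevel
  sets at the intermediate level \<open>\<beta>\<close> cannot jump from the \<open>y1\<close>-side to the \<open>y2\<close>-side.\<close>

lemma komiya_gap:
  assumes "comb_closed comb K" "\<alpha> < \<beta>"
    and low: "\<forall>y. \<exists>x\<in>K. f x y \<le> \<alpha>"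
    and gap: "\<And>x. x \<in> K \<Longrightarrow> \<beta> < max (f x y1) (f x y2)"
  shows False
proof -
  define C where "C t = {x\<in>K. f x (combY t y1 y2) \<le> \<beta>}" for t
  define A1 where "A1 = {x. f x y1 \<le> \<beta>}"
  define A2 where "A2 = {x. f x y2 \<le> \<beta>}"
  have disj: "K \<inter> A1 \<inter> A2 = {}" "K \<inter> A2 \<inter> A1 = {}"
    using gap unfolding A1_def A2_def by (auto simp: not_le[symmetric])
  have sides: "\<forall>t\<in>{0..1}. C t \<subseteq> A1 \<or> C t \<subseteq> A2" "\<forall>t\<in>{0..1}. C t \<subseteq> A2 \<or> C t \<subseteq> A1"
    using sublevel_on_one_side[OF assms(1) _ disj(1)[unfolded A1_def A2_def]]
    unfolding C_def A1_def A2_def by blast+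
  have low_t: "\<forall>t. \<exists>x\<in>K. f x (combY t y1 y2) \<le> \<alpha>" using low by blast
  define T1 where "T1 = {t\<in>{0..1}. C t \<subseteq> A1}"
  define T2 where "T2 = {t\<in>{0..1}. C t \<subseteq> A2}"
  have "openin (top_of_set {0..1}) T1" "openin (top_of_set {0..1}) T2"
    unfolding T1_def T2_def C_def
    by (rule side_openin[OF \<open>\<alpha> < \<beta>\<close> low_t sides(1)[unfolded C_def] disj(1)],
        rule side_openin[OF \<open>\<alpha> < \<beta>\<close> low_t sides(2)[unfolded C_def] disj(2)])
  moreover have "{0..1} \<subseteq> T1 \<union> T2" using sides unfolding T1_def T2_def by blast
  moreover have "T1 \<inter> T2 = {}"
  proof -
    have False if "t \<in> T1" "t \<in> T2" for t
    proof -
      obtain x where "x \<in> K" "f x (combY t y1 y2) \<le> \<alpha>" using low by blast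
      with \<open>\<alpha> < \<beta>\<close> have "x \<in> C t" unfolding C_def by simp
      then show False using that disj \<open>x \<in> K\<close> unfolding T1_def T2_def by blast
    qed
    then show ?thesis by blast
  qed
  moreover have "0 \<in> T1" "1 \<in> T2" unfolding T1_def T2_def C_def A1_def A2_def by (auto simp: combY0 combY1)
  ultimately have "\<not> connected {0..1::real}" unfolding connected_openin by blast
  then show False by simp
qed

lemma komiya_two_point:
  assumes K: "compact K" "comb_closed comb K"
    and hyp: "\<forall>x\<in>K. \<alpha> < max (f x y1) (f x y2)"
  shows "\<exists>y0. \<forall>x\<in>K. \<alpha> < f x y0"
proof (rule ccontr)
  assume "\<not> ?thesis"
  then have low: "\<forall>y. \<exists>x\<in>K. f x y \<le> \<alpha>" by (auto simp: not_less)
  then have "K \<noteq> {}" by blast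
  have "continuous_on K (\<lambda>x. max (f x y1) (f x y2))"
    by (intro continuous_intros continuous_on_subset[OF f_cont]) auto
  then obtain x0 where x0: "x0 \<in> K" "\<forall>x\<in>K. max (f x0 y1) (f x0 y2) \<le> max (f x y1) (f x y2)"
    using continuous_attains_inf[OF K(1) \<open>K \<noteq> {}\<close>] by blast
  define m where "m = max (f x0 y1) (f x0 y2)"
  have "\<alpha> < m" using hyp x0(1) unfolding m_def by blast
  show False
  proof (rule komiya_gap[OF K(2) _ low])
    show "\<alpha> < (\<alpha> + m) / 2" using \<open>\<alpha> < m\<close> by (simp add: field_simps)
    fix x assume "x \<in> K"
    then have "m \<le> max (f x y1) (f x y2)" using x0(2) unfolding m_def by blast
    then show "(\<alpha> + m) / 2 < max (f x y1) (f x y2)" using \<open>\<alpha> < m\<close> by (simp add: field_simps)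
  qed
qed

lemma komiya_finite:
  assumes "finite Y" "compact K" "comb_closed comb K" "\<forall>x\<in>K. \<exists>y\<in>Y. \<alpha> < f x y"
  shows "\<exists>y0. \<forall>x\<in>K. \<alpha> < f x y0"
  using assms
proof (induction Y arbitrary: K rule: finite_induct)
  case (insert y Y K)
  define K' where "K' = {x\<in>K. f x y \<le> \<alpha>}"
  have "K' = K \<inter> {x. f x y \<le> \<alpha>}" unfolding K'_def by auto
  then have "compact K'" using compact_Int_closed[OF insert.prems(1) closed_sublevel] by simp
  moreover have "comb_closed comb K'" unfolding K'_def by (rule comb_closed_sublevel[OF insert.prems(2)])
  moreover have "\<forall>x\<in>K'. \<exists>y\<in>Y. \<alpha> < f x y" using insert.prems(3) unfolding K'_def by force
  ultimately obtain y' where "\<forall>x\<in>K'. \<alpha> < f x y'" using insert.IH by blast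
  then have "\<forall>x\<in>K. \<alpha> < max (f x y') (f x y)" unfolding K'_def by force
  then show ?case by (rule komiya_two_point[OF insert.prems(1,2)])
qed auto

theorem sion:
  assumes "compact K" "comb_closed comb K"
    and hyp: "\<forall>y. \<exists>x\<in>K. f x y \<le> \<psi>"
  shows "\<exists>x\<in>K. \<forall>y. f x y \<le> \<psi>"
proof -
  have "K \<inter> \<Inter> ((\<lambda>y. {x. f x y \<le> \<psi>}) ` UNIV) \<noteq> {}"
  proof (rule compact_imp_fip_image[OF \<open>compact K\<close> closed_sublevel])
    fix Y :: "'b set" assume "finite Y"
    show "K \<inter> \<Inter> ((\<lambda>y. {x. f x y \<le> \<psi>}) ` Y) \<noteq> {}"
    proof
      assume "K \<inter> \<Inter> ((\<lambda>y. {x. f x y \<le> \<psi>}) ` Y) = {}"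
      then have "\<forall>x\<in>K. \<exists>y\<in>Y. \<psi> < f x y" by (fastforce simp: not_le)
      then show False using komiya_finite[OF \<open>finite Y\<close> assms(1,2)] hyp by (meson not_le)
    qed
  qed
  then show ?thesis by auto
qed

end

section \<open>Norms and dual norms\<close>

context
  fixes nrm :: "real^'n \<Rightarrow> real"
  assumes nrm: "is_norm nrm"
begin

lemma norm_triangle: "nrm (x + y) \<le> nrm x + nrm y"
  using nrm unfolding is_norm_def by blast

lemma norm_scaleR: "nrm (c *\<^sub>R x) = \<bar>c\<bar> * nrm x"
  using nrm unfolding is_norm_def by blast

lemma norm_eq_zero_iff: "nrm x = 0 \<longleftrightarrow> x = 0"
  using nrm unfolding is_norm_def by blast

lemma norm_zero [simp]: "nrm 0 = 0"
  using norm_eq_zero_iff by simp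

lemma norm_uminus: "nrm (- x) = nrm x"
  using norm_scaleR[of "-1" x] by simp

lemma norm_nonneg: "0 \<le> nrm x"
  using norm_triangle[of x "- x"] by (simp add: norm_uminus)

lemma norm_pos: "x \<noteq> 0 \<Longrightarrow> 0 < nrm x"
  using norm_nonneg norm_eq_zero_iff by (metis order_le_less)

lemma norm_minus_commute: "nrm (x - y) = nrm (y - x)"
  using norm_uminus[of "x - y"] by simp

lemma norm_convex_comb:
  assumes "0 \<le> t" "t \<le> 1"
  shows "nrm ((1 - t) *\<^sub>R x + t *\<^sub>R y) \<le> (1 - t) * nrm x + t * nrm y"
  using norm_triangle norm_scaleR assms by (metis abs_of_nonneg diff_ge_0_iff_ge)

lemma norm_sum_le: "nrm (\<Sum>i\<in>S. f i) \<le> (\<Sum>i\<in>S. nrm (f i))"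
proof (induction S rule: infinite_finite_induct)
  case (insert x F)
  then show ?case using norm_triangle[of "f x" "sum f F"] by simp
qed auto

lemma norm_le_euclidean: "nrm x \<le> (\<Sum>b\<in>Basis. nrm b) * norm x"
proof -
  have "nrm x = nrm (\<Sum>b\<in>Basis. (x \<bullet> b) *\<^sub>R b)" by (simp add: euclidean_representation)
  also have "\<dots> \<le> (\<Sum>b\<in>Basis. nrm ((x \<bullet> b) *\<^sub>R b))" by (rule norm_sum_le)
  also have "\<dots> = (\<Sum>b\<in>Basis. \<bar>x \<bullet> b\<bar> * nrm b)" by (simp add: norm_scaleR)
  also have "\<dots> \<le> (\<Sum>b\<in>Basis. norm x * nrm b)"
    by (intro sum_mono mult_right_mono Basis_le_norm norm_nonneg)
  finally show ?thesis by (simp add: sum_distrib_left mult.commute)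
qed

lemma continuous_on_norm: "continuous_on S nrm"
proof -
  define C where "C = (\<Sum>b\<in>Basis. nrm (b::real^'n))"
  have "C-lipschitz_on S nrm"
  proof (rule lipschitz_onI)
    fix x y
    have "\<bar>nrm x - nrm y\<bar> \<le> nrm (x - y)"
      using norm_triangle[of y "x - y"] norm_triangle[of x "y - x"] norm_minus_commute[of y x] by simp
    also have "\<dots> \<le> C * norm (x - y)" unfolding C_def by (rule norm_le_euclidean)
    finally show "dist (nrm x) (nrm y) \<le> C * dist x y" by (simp add: dist_real_def dist_norm)
    show "0 \<le> C" unfolding C_def by (simp add: sum_nonneg norm_nonneg)
  qed
  then show ?thesis by (rule lipschitz_on_continuous_on)
qed

lemma continuous_on_norm_comp [continuous_intros]:
  "continuous_on S g \<Longrightarrow> continuous_on S (\<lambda>x. nrm (g x))"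
  using continuous_on_compose[of S g nrm] continuous_on_norm by (simp add: o_def)

lemma norm_ge_euclidean: "\<exists>c>0. \<forall>x. c * norm x \<le> nrm x"
proof -
  have ne: "sphere (0::real^'n) 1 \<noteq> {}" by (simp add: sphere_eq_empty)
  obtain x0 where x0: "x0 \<in> sphere 0 1" "\<forall>y\<in>sphere 0 1. nrm x0 \<le> nrm y"
    using continuous_attains_inf[OF compact_sphere ne continuous_on_norm] by blast
  then have "nrm x0 > 0" by (intro norm_pos) auto
  moreover have "nrm x0 * norm x \<le> nrm x" for x
  proof (cases "x = 0")
    case False
    then have "nrm x0 \<le> nrm ((1 / norm x) *\<^sub>R x)" using x0 by simp
    also have "\<dots> = nrm x / norm x" by (simp add: norm_scaleR)
    finally show ?thesis using False by (simp add: field_simps)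
  qed simp
  ultimately show ?thesis by blast
qed

lemma bdd_above_dual_norm: "bdd_above ((\<lambda>x. z \<bullet> x) ` {x. nrm x \<le> 1})"
proof -
  obtain c where c: "c > 0" "\<forall>x. c * norm x \<le> nrm x" using norm_ge_euclidean by blast
  have "z \<bullet> x \<le> norm z / c" if "nrm x \<le> 1" for x
  proof -
    have "z \<bullet> x \<le> norm z * norm x" by (metis Cauchy_Schwarz_ineq2 abs_le_D1)
    also have "\<dots> \<le> norm z * (1 / c)"
      using c that by (intro mult_left_mono) (auto simp: field_simps intro: order.trans)
    finally show ?thesis by simp
  qed
  then show ?thesis unfolding bdd_above_def by blast
qed

lemma inner_le_dual_norm: "nrm x \<le> 1 \<Longrightarrow> z \<bullet> x \<le> dual_norm nrm z"
  unfolding dual_norm_def by (rule cSUP_upper[OF _ bdd_above_dual_norm]) simp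

lemma inner_le_dual_norm_mult: "z \<bullet> x \<le> dual_norm nrm z * nrm x"
proof (cases "x = 0")
  case False
  then have p: "nrm x > 0" by (rule norm_pos)
  have "z \<bullet> ((1 / nrm x) *\<^sub>R x) \<le> dual_norm nrm z"
    using p by (intro inner_le_dual_norm) (simp add: norm_scaleR)
  then show ?thesis using p by (simp add: field_simps)
next
  case True
  then show ?thesis using inner_le_dual_norm[of 0 z] by simp
qed

lemma dual_norm_le:
  assumes "0 \<le> \<mu>" and bounded: "\<And>y. - (z \<bullet> y) - \<mu> * nrm y \<le> c"
  shows "dual_norm nrm z \<le> \<mu>"
proof (rule ccontr)
  assume "\<not> ?thesis"
  then obtain x where x: "nrm x \<le> 1" "z \<bullet> x > \<mu>"
    unfolding dual_norm_def using less_cSUP_iff[OF _ bdd_above_dual_norm, of \<mu> z]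
    by (metis (no_types, lifting) empty_iff mem_Collect_eq norm_zero not_le zero_le_one)
  define T where "T = (\<bar>c\<bar> + 1) / (z \<bullet> x - \<mu>)"
  have "T > 0" unfolding T_def using x by simp
  have "\<mu> * (T * nrm x) \<le> \<mu> * T"
    using \<open>T > 0\<close> \<open>0 \<le> \<mu>\<close> x(1) by (intro mult_left_mono mult_left_le) auto
  have "\<bar>c\<bar> + 1 = T * (z \<bullet> x - \<mu>)" unfolding T_def using x by simp
  also have "\<dots> \<le> T * (z \<bullet> x) - \<mu> * (T * nrm x)"
    using \<open>\<mu> * (T * nrm x) \<le> \<mu> * T\<close> by (simp add: algebra_simps)
  also have "\<dots> = - (z \<bullet> ((- T) *\<^sub>R x)) - \<mu> * nrm ((- T) *\<^sub>R x)"
    using \<open>T > 0\<close> by (simp add: norm_scaleR norm_uminus)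
  also have "\<dots> \<le> c" by (rule bounded)
  finally show False by linarith
qed


lemma dual_norm_le_of_bound:
  fixes z :: "nat \<Rightarrow> real^'n"
  assumes "0 \<le> \<mu>" "j < M"
    and bound: "\<And>y. c - (\<Sum>i<M. z i \<bullet> y i) - \<mu> * (\<Sum>i<M. nrm (y i)) \<le> \<psi>"
  shows "dual_norm nrm (z j) \<le> \<mu>"
proof (rule dual_norm_le[OF \<open>0 \<le> \<mu>\<close>])
  fix v
  define y where "y = (\<lambda>i. if i = j then v else 0 :: real^'n)"
  have "(\<Sum>i<M. z i \<bullet> y i) = z j \<bullet> v" "(\<Sum>i<M. nrm (y i)) = nrm v"
    using \<open>j < M\<close> unfolding y_def by (simp_all add: if_distrib[of "inner _"] if_distrib[of nrm] cong: if_cong)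
  then show "- (z j \<bullet> v) - \<mu> * nrm v \<le> \<psi> - c"
    using bound[of y] by simp
qed

end

section \<open>Losses given by polytopes\<close>

definition convex_comb :: "real \<Rightarrow> ('i \<Rightarrow> 'a::real_vector) \<Rightarrow> ('i \<Rightarrow> 'a) \<Rightarrow> 'i \<Rightarrow> 'a" where
  "convex_comb t y1 y2 = (\<lambda>k. (1 - t) *\<^sub>R y1 k + t *\<^sub>R y2 k)"

lemma convex_comb_0 [simp]: "convex_comb 0 y1 y2 = y1"
  and convex_comb_1 [simp]: "convex_comb 1 y1 y2 = y2"
  by (simp_all add: convex_comb_def)

lemma convex_comb_le_max:
  fixes a b t :: real
  assumes "0 \<le> t" "t \<le> 1"
  shows "(1 - t) * a + t * b \<le> max a b"
proof -
  have "(1 - t) * a + t * b \<le> (1 - t) * max a b + t * max a b"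
    using assms by (intro add_mono mult_left_mono) auto
  then show ?thesis by (simp add: algebra_simps)
qed

lemma min_le_convex_comb:
  fixes a b t :: real
  assumes "0 \<le> t" "t \<le> 1"
  shows "min a b \<le> (1 - t) * a + t * b"
proof -
  have "(1 - t) * min a b + t * min a b \<le> (1 - t) * a + t * b"
    using assms by (intro add_mono mult_left_mono) auto
  then show ?thesis by (simp add: algebra_simps)
qed

definition affine_value :: "nat \<Rightarrow> ((nat \<Rightarrow> real^'n) \<times> real) \<Rightarrow> (nat \<Rightarrow> real^'n) \<Rightarrow> real" where
  "affine_value N h y = (\<Sum>k<N. fst h k \<bullet> y k) + snd h"

definition hull_point :: "nat \<Rightarrow> ((nat \<Rightarrow> real^'n) \<times> real) set
    \<Rightarrow> (((nat \<Rightarrow> real^'n) \<times> real) \<Rightarrow> real) \<Rightarrow> (nat \<Rightarrow> real^'n) \<times> real" where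
  "hull_point N V w =
     ((\<lambda>k. if k < N then (\<Sum>v\<in>V. w v *\<^sub>R fst v k) else undefined), (\<Sum>v\<in>V. w v * snd v))"

lemma affine_value_hull_point:
  assumes "finite V" "(\<Sum>v\<in>V. w v) = 1"
  shows "affine_value N (hull_point N V w) y = (\<Sum>v\<in>V. w v * affine_value N v y)"
proof -
  have "affine_value N (hull_point N V w) y
      = (\<Sum>k<N. \<Sum>v\<in>V. w v * (fst v k \<bullet> y k)) + (\<Sum>v\<in>V. w v * snd v)"
    unfolding affine_value_def hull_point_def by (simp add: inner_sum_left)
  also have "\<dots> = (\<Sum>v\<in>V. w v * affine_value N v y)"
    unfolding affine_value_def
    by (simp add: sum.swap[of _ "{..<N}"] distrib_left sum.distrib sum_distrib_left)
  finally show ?thesis .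
qed

lemma affine_value_convex_comb:
  "affine_value N h (convex_comb t y1 y2) = (1 - t) * affine_value N h y1 + t * affine_value N h y2"
proof -
  have "(\<Sum>k<N. fst h k \<bullet> ((1 - t) *\<^sub>R y1 k + t *\<^sub>R y2 k))
      = (1 - t) * (\<Sum>k<N. fst h k \<bullet> y1 k) + t * (\<Sum>k<N. fst h k \<bullet> y2 k)"
    by (simp add: inner_add_right sum.distrib sum_distrib_left)
  then show ?thesis unfolding affine_value_def convex_comb_def by (simp add: algebra_simps)
qed

context
  fixes N :: nat and H :: "((nat \<Rightarrow> real^'n) \<times> real) set" and V
  assumes V: "finite V" "V \<noteq> {}" "V \<subseteq> blocks N \<times> UNIV"
    and HV: "H = {((\<lambda>k. if k < N then (\<Sum>v\<in>V. w v *\<^sub>R fst v k) else undefined),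
           (\<Sum>v\<in>V. w v * snd v)) | w. (\<forall>v\<in>V. 0 \<le> w v) \<and> (\<Sum>v\<in>V. w v) = 1}"
begin

lemma polytope_eq_hull_points: "H = {hull_point N V w | w. (\<forall>v\<in>V. 0 \<le> w v) \<and> (\<Sum>v\<in>V. w v) = 1}"
  unfolding HV hull_point_def by simp

lemma hull_point_in_polytope: "(\<forall>v\<in>V. 0 \<le> w v) \<Longrightarrow> (\<Sum>v\<in>V. w v) = 1 \<Longrightarrow> hull_point N V w \<in> H"
  unfolding polytope_eq_hull_points by blast

lemma vertex_in_polytope:
  assumes v: "v \<in> V" shows "v \<in> H"
proof -
  define w where "w u = (if u = v then 1 else (0::real))" for u
  have "fst v \<in> blocks N" using V(3) v by auto
  then have "(\<lambda>k. if k < N then (\<Sum>u\<in>V. w u *\<^sub>R fst u k) else undefined) = fst v"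
    using v V(1) unfolding w_def blocks_def
    by (auto simp: fun_eq_iff if_distrib[of "\<lambda>x. x *\<^sub>R _"] sum.delta' PiE_def extensional_def cong: if_cong)
  moreover have "(\<Sum>u\<in>V. w u * snd u) = snd v"
    using v V(1) unfolding w_def by (simp add: if_distrib[of "\<lambda>x. x * _"] sum.delta' cong: if_cong)
  ultimately have "hull_point N V w = v" unfolding hull_point_def by (simp add: prod_eq_iff)
  moreover have "\<forall>u\<in>V. 0 \<le> w u" "(\<Sum>u\<in>V. w u) = 1" using v V(1) unfolding w_def by (auto simp: sum.delta')
  ultimately show ?thesis using hull_point_in_polytope by metis
qed

lemma Min_vertices_le_affine_value:
  assumes "h \<in> H" shows "Min ((\<lambda>v. affine_value N v y) ` V) \<le> affine_value N h y"
proof -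
  obtain w where w: "\<forall>v\<in>V. 0 \<le> w v" "(\<Sum>v\<in>V. w v) = 1" "h = hull_point N V w"
    using assms unfolding polytope_eq_hull_points by blast
  have "Min ((\<lambda>v. affine_value N v y) ` V) = (\<Sum>v\<in>V. w v * Min ((\<lambda>v. affine_value N v y) ` V))"
    using w(2) by (simp add: sum_distrib_right[symmetric])
  also have "\<dots> \<le> (\<Sum>v\<in>V. w v * affine_value N v y)"
    using V(1) w(1) by (intro sum_mono mult_left_mono) auto
  also have "\<dots> = affine_value N h y" using affine_value_hull_point[OF V(1) w(2)] w(3) by simp
  finally show ?thesis .
qed

lemma loss_eq_Min_vertices: "loss N H y = Min ((\<lambda>v. affine_value N v y) ` V)"
proof -
  obtain v0 where v0: "v0 \<in> V" "affine_value N v0 y = Min ((\<lambda>v. affine_value N v y) ` V)"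
    using V(1,2) by (metis (no_types, lifting) Min_in empty_is_image finite_imageI imageE)
  have "(INF h\<in>H. affine_value N h y) = Min ((\<lambda>v. affine_value N v y) ` V)"
  proof (rule antisym)
    show "(INF h\<in>H. affine_value N h y) \<le> Min ((\<lambda>v. affine_value N v y) ` V)"
      using v0 vertex_in_polytope[OF v0(1)]
      by (metis (no_types, lifting) cINF_lower bdd_below.I2 Min_vertices_le_affine_value)
    show "Min ((\<lambda>v. affine_value N v y) ` V) \<le> (INF h\<in>H. affine_value N h y)"
      using vertex_in_polytope[OF v0(1)] by (intro cINF_greatest Min_vertices_le_affine_value) auto
  qed
  then show ?thesis unfolding loss_def affine_value_def by simp
qed

lemma loss_le_affine_value: "h \<in> H \<Longrightarrow> loss N H y \<le> affine_value N h y"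
  using loss_eq_Min_vertices Min_vertices_le_affine_value by simp

lemma loss_attained_at_vertex: "\<exists>v\<in>V. loss N H y = affine_value N v y"
  using V(1,2) loss_eq_Min_vertices
  by (metis (no_types, lifting) Min_in empty_is_image finite_imageI imageE)

lemma loss_concave:
  assumes "0 \<le> t" "t \<le> 1"
  shows "(1 - t) * loss N H y1 + t * loss N H y2 \<le> loss N H (convex_comb t y1 y2)"
proof -
  obtain v where v: "v \<in> V" "loss N H (convex_comb t y1 y2) = affine_value N v (convex_comb t y1 y2)"
    using loss_attained_at_vertex by blast
  have "loss N H y1 \<le> affine_value N v y1" "loss N H y2 \<le> affine_value N v y2"
    using loss_le_affine_value vertex_in_polytope v by auto
  then have "(1 - t) * loss N H y1 + t * loss N H y2 \<le> (1 - t) * affine_value N v y1 + t * affine_value N v y2"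
    using assms by (intro add_mono mult_left_mono) auto
  then show ?thesis using v affine_value_convex_comb by metis
qed

lemma loss_linear_growth: "\<exists>A B. \<forall>y. \<bar>loss N H y\<bar> \<le> A + B * (\<Sum>k<N. norm (y k))"
proof -
  define A where "A = (\<Sum>v\<in>V. \<bar>snd v\<bar>)"
  define B where "B = (\<Sum>v\<in>V. \<Sum>k<N. norm (fst v k))"
  have "\<bar>affine_value N v y\<bar> \<le> A + B * (\<Sum>k<N. norm (y k))" if v: "v \<in> V" for v y
  proof -
    have "\<bar>affine_value N v y\<bar> \<le> (\<Sum>k<N. norm (fst v k) * norm (y k)) + \<bar>snd v\<bar>"
      unfolding affine_value_def
      by (rule order.trans[OF abs_triangle_ineq add_right_mono[OF order.trans[OF sum_abs sum_mono]]])
        (rule Cauchy_Schwarz_ineq2)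
    also have "\<dots> \<le> (\<Sum>k<N. (\<Sum>k<N. norm (fst v k)) * norm (y k)) + \<bar>snd v\<bar>"
      by (intro add_right_mono sum_mono mult_right_mono member_le_sum) auto
    also have "\<dots> \<le> B * (\<Sum>k<N. norm (y k)) + A"
    proof (intro add_mono)
      have "(\<Sum>k<N. norm (fst v k)) \<le> B" unfolding B_def
        using v V(1) by (intro member_le_sum[where f="\<lambda>v. \<Sum>k<N. norm (fst v k)"]) (auto simp: sum_nonneg)
      then show "(\<Sum>k<N. (\<Sum>k<N. norm (fst v k)) * norm (y k)) \<le> B * (\<Sum>k<N. norm (y k))"
        by (simp add: sum_distrib_left[symmetric] mult_right_mono sum_nonneg)
      show "\<bar>snd v\<bar> \<le> A" unfolding A_def using v V(1)
        by (intro member_le_sum[where f="\<lambda>v. \<bar>snd v\<bar>"]) auto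
    qed
    finally show ?thesis by simp
  qed
  then show ?thesis using loss_attained_at_vertex by metis
qed

end

section \<open>Symmetrization and permutation classes\<close>

lemma finite_Lset: "finite (Lset M N)"
  unfolding Lset_def by (rule finite_subset[OF _ finite_PiE[of "{..<N}" "\<lambda>_. {..<M}"]]) auto

lemma Lset_less: "l \<in> Lset M N \<Longrightarrow> k < N \<Longrightarrow> l k < M"
  unfolding Lset_def by (auto simp: PiE_def Pi_def)

lemma restrict_permutation_in_Lset:
  assumes "\<pi> permutes {..<M}" "N \<le> M"
  shows "restrict \<pi> {..<N} \<in> Lset M N"
proof -
  have "\<pi> k < M" if "k < N" for k using permutes_in_image[OF assms(1)] that assms(2) by auto
  moreover have "inj_on \<pi> {..<N}" using permutes_inj[OF assms(1)] by (simp add: inj_on_def inj_def)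
  ultimately show ?thesis unfolding Lset_def by (auto simp: inj_on_def)
qed

lemma Lset_extends_to_permutation:
  assumes l: "l \<in> Lset M N" and "N \<le> M"
  shows "\<exists>\<sigma>. \<sigma> permutes {..<M} \<and> (\<forall>k<N. \<sigma> k = l k)"
proof -
  have li: "inj_on l {..<N}" and lim: "l ` {..<N} \<subseteq> {..<M}"
    using l unfolding Lset_def by (auto simp: PiE_def Pi_def)
  define B where "B = {..<M} - l ` {..<N}"
  have "card B = card {N..<M}" unfolding B_def
    using card_Diff_subset[OF finite_imageI lim] card_image[OF li] by simp
  then obtain g where g: "bij_betw g {N..<M} B" using finite_same_card_bij[of "{N..<M}" B] unfolding B_def by auto
  define \<sigma> where "\<sigma> k = (if k < N then l k else if k < M then g k else k)" for k
  have "bij_betw \<sigma> {..<N} (l ` {..<N})"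
    using li unfolding \<sigma>_def bij_betw_def inj_on_def by (auto simp: image_def)
  moreover have "bij_betw \<sigma> {N..<M} B"
    using g unfolding \<sigma>_def by (rule bij_betw_cong[THEN iffD1, rotated]) auto
  ultimately have "bij_betw \<sigma> ({..<N} \<union> {N..<M}) (l ` {..<N} \<union> B)"
    by (rule bij_betw_combine) (auto simp: B_def)
  moreover have "{..<N} \<union> {N..<M} = {..<M}" "l ` {..<N} \<union> B = {..<M}"
    using \<open>N \<le> M\<close> lim unfolding B_def by auto
  ultimately have "\<sigma> permutes {..<M}"
    by (intro bij_imp_permutes) (auto simp: \<sigma>_def)
  then show ?thesis unfolding \<sigma>_def by auto
qed

lemma card_permutations_restricting_to:
  assumes l: "l \<in> Lset M N" and "N \<le> M"
  shows "card {\<pi>. \<pi> permutes {..<M} \<and> restrict \<pi> {..<N} = l} = fact (M - N)"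
proof -
  obtain \<sigma> where \<sigma>: "\<sigma> permutes {..<M}" "\<forall>k<N. \<sigma> k = l k"
    using Lset_extends_to_permutation[OF assms] by blast
  have l_undefined: "l k = undefined" if "\<not> k < N" for k
    using l that unfolding Lset_def by (auto simp: PiE_def extensional_def)
  define T where "T = {\<tau>. \<tau> permutes {N..<M}}"
  have "{\<pi>. \<pi> permutes {..<M} \<and> restrict \<pi> {..<N} = l} = (\<lambda>\<tau>. \<sigma> \<circ> \<tau>) ` T"
  proof (intro set_eqI iffI)
    fix \<pi> assume "\<pi> \<in> {\<pi>. \<pi> permutes {..<M} \<and> restrict \<pi> {..<N} = l}"
    then have \<pi>: "\<pi> permutes {..<M}" "\<forall>k<N. \<pi> k = l k" by (auto dest: fun_cong)
    define \<tau> where "\<tau> = inv \<sigma> \<circ> \<pi>"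
    have "\<tau> permutes {..<M}" unfolding \<tau>_def by (rule permutes_compose[OF \<pi>(1) permutes_inv[OF \<sigma>(1)]])
    moreover have "\<tau> k = k" if "k < N" for k
      using \<pi>(2) \<sigma>(2) that permutes_inverses(2)[OF \<sigma>(1), of k] unfolding \<tau>_def by simp
    ultimately have "\<tau> permutes {N..<M}"
      unfolding permutes_def by (metis atLeastLessThan_iff lessThan_iff not_le)
    moreover have "\<pi> = \<sigma> \<circ> \<tau>" unfolding \<tau>_def using permutes_inverses(1)[OF \<sigma>(1)] by (auto simp: fun_eq_iff)
    ultimately show "\<pi> \<in> (\<lambda>\<tau>. \<sigma> \<circ> \<tau>) ` T" unfolding T_def by auto
  next
    fix \<pi> assume "\<pi> \<in> (\<lambda>\<tau>. \<sigma> \<circ> \<tau>) ` T"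
    then obtain \<tau> where \<tau>: "\<tau> permutes {N..<M}" "\<pi> = \<sigma> \<circ> \<tau>" unfolding T_def by auto
    have "restrict \<pi> {..<N} = l"
      using \<tau> \<sigma>(2) l_undefined permutes_not_in[OF \<tau>(1)] by (auto simp: restrict_def fun_eq_iff)
    moreover have "\<tau> permutes {..<M}" by (rule permutes_subset[OF \<tau>(1)]) auto
    ultimately show "\<pi> \<in> {\<pi>. \<pi> permutes {..<M} \<and> restrict \<pi> {..<N} = l}"
      using permutes_compose[OF _ \<sigma>(1)] \<tau>(2) by auto
  qed
  moreover have "inj_on (\<lambda>\<tau>. \<sigma> \<circ> \<tau>) T"
    by (auto simp: inj_on_def fun_eq_iff dest: injD[OF permutes_inj[OF \<sigma>(1)]])
  moreover have "card T = fact (M - N)" unfolding T_def by (rule card_permutations) auto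
  ultimately show ?thesis by (simp add: card_image)
qed

lemma sum_permutations_restrict:
  assumes "N \<le> M"
  shows "(\<Sum>\<pi>\<in>{\<pi>. \<pi> permutes {..<M}}. G (restrict \<pi> {..<N})) = fact (M - N) * (\<Sum>l\<in>Lset M N. G l)"
proof -
  have "(\<Sum>\<pi>\<in>{\<pi>. \<pi> permutes {..<M}}. G (restrict \<pi> {..<N}))
      = (\<Sum>l\<in>Lset M N. \<Sum>\<pi>\<in>{\<pi>\<in>{\<pi>. \<pi> permutes {..<M}}. restrict \<pi> {..<N} = l}. G (restrict \<pi> {..<N}))"
    by (rule sum.group[symmetric]) (use restrict_permutation_in_Lset assms finite_Lset finite_permutations[of "{..<M}"] in auto)
  also have "\<dots> = (\<Sum>l\<in>Lset M N. fact (M - N) * G l)"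
    by (intro sum.cong) (simp_all add: card_permutations_restricting_to[OF _ assms])
  finally show ?thesis by (simp add: sum_distrib_left)
qed

definition sym_loss :: "nat \<Rightarrow> nat \<Rightarrow> ((nat \<Rightarrow> real^'n) \<times> real) set \<Rightarrow> (nat \<Rightarrow> real^'n) \<Rightarrow> real" where
  "sym_loss M N H = symmetrize M (\<lambda>y. loss N H (proj_first N y))"

lemma loss_cong: "(\<And>k. k < N \<Longrightarrow> y k = y' k) \<Longrightarrow> loss N H y = loss N H y'"
  unfolding loss_def by (intro INF_cong refl) simp

lemma sym_loss_cong:
  assumes "\<And>k. k < M \<Longrightarrow> y k = y' k"
  shows "sym_loss M N H y = sym_loss M N H y'"
proof -
  have "restrict (\<lambda>k. y (\<pi> k)) {..<M} = restrict (\<lambda>k. y' (\<pi> k)) {..<M}" if "\<pi> permutes {..<M}" for \<pi>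
    using assms permutes_in_image[OF that] by (auto simp: restrict_def)
  then show ?thesis unfolding sym_loss_def symmetrize_def by (intro arg_cong2[where f = "(*)"] refl sum.cong) auto
qed

lemma sym_loss_eq_sum_Lset:
  assumes "N \<le> M"
  shows "sym_loss M N H x = (fact (M - N) / fact M) * (\<Sum>l\<in>Lset M N. loss N H (\<lambda>k. x (l k)))"
proof -
  have "(\<Sum>\<pi>\<in>{\<pi>. \<pi> permutes {..<M}}. loss N H (proj_first N (restrict (\<lambda>k. x (\<pi> k)) {..<M})))
      = (\<Sum>\<pi>\<in>{\<pi>. \<pi> permutes {..<M}}. (\<lambda>l. loss N H (\<lambda>k. x (l k))) (restrict \<pi> {..<N}))"
    by (intro sum.cong refl loss_cong) (use assms in \<open>auto simp: proj_first_def\<close>)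
  also have "\<dots> = fact (M - N) * (\<Sum>l\<in>Lset M N. loss N H (\<lambda>k. x (l k)))"
    by (rule sum_permutations_restrict[OF assms])
  finally show ?thesis unfolding sym_loss_def symmetrize_def by simp
qed

lemma sym_loss_permute:
  assumes \<tau>: "\<tau> permutes {..<M}"
  shows "sym_loss M N H (\<lambda>k. x (\<tau> k)) = sym_loss M N H x"
proof -
  let ?P = "{\<pi>. \<pi> permutes {..<M}}"
  let ?g = "\<lambda>\<pi>. loss N H (proj_first N (restrict (\<lambda>k. x (\<pi> k)) {..<M}))"
  have "(\<lambda>\<pi>. \<tau> \<circ> \<pi>) ` ?P = ?P"
  proof (intro set_eqI iffI)
    fix \<pi> assume "\<pi> \<in> ?P"
    then have "inv \<tau> \<circ> \<pi> \<in> ?P" "\<pi> = \<tau> \<circ> (inv \<tau> \<circ> \<pi>)"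
      using permutes_compose[OF _ permutes_inv[OF \<tau>]] permutes_inverses(1)[OF \<tau>] by (auto simp: fun_eq_iff)
    then show "\<pi> \<in> (\<lambda>\<pi>. \<tau> \<circ> \<pi>) ` ?P" by blast
  qed (use permutes_compose[OF _ \<tau>] in auto)
  moreover have "inj_on (\<lambda>\<pi>. \<tau> \<circ> \<pi>) ?P"
    by (auto simp: inj_on_def fun_eq_iff dest: injD[OF permutes_inj[OF \<tau>]])
  ultimately have "sum ?g ?P = sum (?g \<circ> (\<lambda>\<pi>. \<tau> \<circ> \<pi>)) ?P"
    by (metis sum.reindex)
  then show ?thesis unfolding sym_loss_def symmetrize_def by (simp add: o_def)
qed

lemma costM_permute:
  assumes "\<tau> permutes {..<M}"
  shows "costM nrm M (\<lambda>k. x (\<tau> k)) (\<lambda>k. y (\<tau> k)) = costM nrm M x y"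
  unfolding costM_def using sum.permute[OF assms, of "\<lambda>i. nrm (x i - y i)"] by (simp add: o_def)

lemma sum_selT_inner:
  assumes "l \<in> Lset M N"
  shows "(\<Sum>j<M. selT M N l a j \<bullet> x j) = (\<Sum>k<N. a k \<bullet> x (l k))"
proof -
  have "(\<Sum>j<M. selT M N l a j \<bullet> x j) = (\<Sum>j<M. \<Sum>k\<in>{k\<in>{..<N}. l k = j}. a k \<bullet> x (l k))"
    unfolding selT_def by (intro sum.cong refl) (auto simp: inner_sum_left)
  also have "\<dots> = (\<Sum>k<N. a k \<bullet> x (l k))"
    by (rule sum.group) (use Lset_less[OF assms] in auto)
  finally show ?thesis .
qed

lemma inner_sum_selT:
  assumes "z = (\<lambda>j. if j < M then c *\<^sub>R (\<Sum>l\<in>Lset M N. selT M N l (a l) j) else undefined)"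
  shows "(\<Sum>j<M. z j \<bullet> x j) = c * (\<Sum>l\<in>Lset M N. \<Sum>k<N. a l k \<bullet> x (l k))"
proof -
  have "(\<Sum>j<M. z j \<bullet> x j) = c * (\<Sum>j<M. \<Sum>l\<in>Lset M N. selT M N l (a l) j \<bullet> x j)"
    unfolding assms by (simp add: inner_sum_left sum_distrib_left)
  also have "\<dots> = c * (\<Sum>l\<in>Lset M N. \<Sum>k<N. a l k \<bullet> x (l k))"
    by (subst sum.swap) (simp add: sum_selT_inner)
  finally show ?thesis .
qed

lemma equiv_perm_equiv: "equiv (Ihat M np) (perm_equiv M np)"
proof (rule equivI)
  show "perm_equiv M np \<subseteq> Ihat M np \<times> Ihat M np" unfolding perm_equiv_def by auto
  show "refl_on (Ihat M np) (perm_equiv M np)"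
    unfolding refl_on_def perm_equiv_def by (auto intro!: exI[of _ id] permutes_id)
  show "sym (perm_equiv M np)"
  proof (rule symI)
    fix i j assume "(i, j) \<in> perm_equiv M np"
    then obtain \<pi> where \<pi>: "i \<in> Ihat M np" "j \<in> Ihat M np" "\<pi> permutes {..<M}" "\<forall>k<M. i k = j (\<pi> k)"
      unfolding perm_equiv_def by auto
    have "j k = i (inv \<pi> k)" if "k < M" for k
      using \<pi>(4) permutes_in_image[OF permutes_inv[OF \<pi>(3)]] permutes_inverses(1)[OF \<pi>(3)] that by auto
    then show "(j, i) \<in> perm_equiv M np"
      unfolding perm_equiv_def using \<pi> permutes_inv[OF \<pi>(3)] by blast
  qed
  show "trans (perm_equiv M np)"
  proof (rule transI)
    fix i j m assume "(i, j) \<in> perm_equiv M np" "(j, m) \<in> perm_equiv M np"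
    then obtain \<pi> \<sigma> where a: "i \<in> Ihat M np" "m \<in> Ihat M np" "\<pi> permutes {..<M}" "\<forall>k<M. i k = j (\<pi> k)"
      "\<sigma> permutes {..<M}" "\<forall>k<M. j k = m (\<sigma> k)" unfolding perm_equiv_def by auto
    then have "\<forall>k<M. i k = m ((\<sigma> \<circ> \<pi>) k)" using permutes_in_image[OF a(3)] by auto
    then show "(i, m) \<in> perm_equiv M np"
      unfolding perm_equiv_def using a permutes_compose[OF a(3,5)] by blast
  qed
qed

lemma finite_Ihat: "finite (Ihat M np)"
  unfolding Ihat_def by (rule finite_PiE) auto

lemma finite_Icls: "finite (Icls M np)"
  unfolding Icls_def by (rule finite_quotient[OF finite_Ihat]) (use equiv_perm_equiv in \<open>auto simp: equiv_def\<close>)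

lemma finite_class: "\<iota> \<in> Icls M np \<Longrightarrow> finite \<iota>"
  unfolding Icls_def by (rule finite_equiv_class[OF finite_Ihat]) (use equiv_perm_equiv in \<open>auto simp: equiv_def\<close>)

lemma class_subset_Ihat: "\<iota> \<in> Icls M np \<Longrightarrow> \<iota> \<subseteq> Ihat M np"
  unfolding Icls_def using in_quotient_imp_subset[OF equiv_perm_equiv] by blast

lemma class_nonempty: "\<iota> \<in> Icls M np \<Longrightarrow> \<iota> \<noteq> {}"
  unfolding Icls_def using in_quotient_imp_non_empty[OF equiv_perm_equiv] by blast

definition class_of :: "nat \<Rightarrow> nat \<Rightarrow> (nat \<Rightarrow> nat) \<Rightarrow> (nat \<Rightarrow> nat) set" where
  "class_of M np i = perm_equiv M np `` {i}"

lemma class_of_in_Icls: "i \<in> Ihat M np \<Longrightarrow> class_of M np i \<in> Icls M np"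
  unfolding class_of_def Icls_def by (rule quotientI)

lemma class_of_self: "i \<in> Ihat M np \<Longrightarrow> i \<in> class_of M np i"
  unfolding class_of_def by (rule equiv_class_self[OF equiv_perm_equiv])

lemma class_of_eq:
  assumes "\<iota> \<in> Icls M np" "i \<in> \<iota>"
  shows "class_of M np i = \<iota>"
proof -
  have i: "i \<in> Ihat M np" using assms class_subset_Ihat by blast
  show ?thesis
    unfolding class_of_def
    using assms(1) unfolding Icls_def
    by (rule quotient_eqI[OF equiv_perm_equiv quotientI[OF i] _ equiv_class_self[OF equiv_perm_equiv i] assms(2)])
      (use equiv_perm_equiv i in \<open>auto simp: equiv_def refl_on_def\<close>)
qed

lemma permutation_within_class:
  assumes "\<iota> \<in> Icls M np" "i \<in> \<iota>" "j \<in> \<iota>"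
  shows "\<exists>\<pi>. \<pi> permutes {..<M} \<and> (\<forall>k<M. i k = j (\<pi> k))"
proof -
  have "(i, j) \<in> perm_equiv M np"
    using in_quotient_imp_in_rel[OF equiv_perm_equiv assms(1)[unfolded Icls_def]] assms(2,3) by blast
  then show ?thesis unfolding perm_equiv_def by auto
qed

lemma sum_Ihat_by_class: "(\<Sum>i\<in>Ihat M np. g i) = (\<Sum>\<iota>\<in>Icls M np. \<Sum>i\<in>\<iota>. g i)"
proof -
  have "(\<Sum>i\<in>Ihat M np. g i) = (\<Sum>i\<in>\<Union>(Icls M np). g i)"
    unfolding Icls_def Union_quotient[OF equiv_perm_equiv] ..
  also have "\<dots> = (\<Sum>\<iota>\<in>Icls M np. \<Sum>i\<in>\<iota>. g i)"
  proof -
    have "\<forall>A\<in>Icls M np. \<forall>B\<in>Icls M np. A \<noteq> B \<longrightarrow> A \<inter> B = {}"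
      using quotient_disj[OF equiv_perm_equiv] unfolding Icls_def by blast
    then show ?thesis using sum.Union_disjoint[of "Icls M np" g] finite_class by (simp add: o_def)
  qed
  finally show ?thesis .
qed

lemma sum_Ihat_regroup:
  "(\<Sum>i\<in>Ihat M np. (g i :: real) * F (class_of M np i)) = (\<Sum>\<iota>\<in>Icls M np. (\<Sum>i\<in>\<iota>. g i) * F \<iota>)"
  unfolding sum_Ihat_by_class
  by (intro sum.cong refl) (simp add: class_of_eq sum_distrib_right)

lemma sum_Ihat_prod: "(\<Sum>j\<in>{1..np}. p j) = 1 \<Longrightarrow> (\<Sum>i\<in>Ihat M np. \<Prod>k<M. p (i k)) = (1::real)"
  unfolding Ihat_def using prod_sum_PiE[of "{..<M}" "\<lambda>_. {1..np}" "\<lambda>_ j. p j"] by simp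

lemma prod_pos_Ihat: "\<forall>j\<in>{1..np}. p j > 0 \<Longrightarrow> i \<in> Ihat M np \<Longrightarrow> (\<Prod>k<M. p (i k)) > (0::real)"
  unfolding Ihat_def by (intro prod_pos) (auto simp: PiE_def Pi_def)

lemma p_cls_pos:
  assumes "\<forall>j\<in>{1..np}. p j > 0" "\<iota> \<in> Icls M np"
  shows "p_cls M p \<iota> > (0::real)"
proof -
  obtain i0 where "i0 \<in> \<iota>" using class_nonempty[OF assms(2)] by blast
  then show ?thesis unfolding p_cls_def
    using finite_class[OF assms(2)] class_subset_Ihat[OF assms(2)] prod_pos_Ihat[OF assms(1)]
    by (intro sum_pos2[of _ i0]) (auto intro: less_imp_le)
qed

section \<open>The nominal distribution\<close>

lemma space_blockspace: "space (blockspace M) = blocks M"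
  unfolding blockspace_def blocks_def by (simp add: space_PiM)

lemma singleton_in_blockspace:
  assumes y: "y \<in> blocks M"
  shows "{y} \<in> sets (blockspace M)"
proof -
  have "{y} = PiE {..<M} (\<lambda>k. {y k})"
  proof (intro set_eqI iffI)
    fix x assume "x \<in> PiE {..<M} (\<lambda>k. {y k})"
    then have "x k = y k" for k
      using y unfolding blocks_def by (cases "k < M") (auto simp: PiE_def extensional_def)
    then show "x \<in> {y}" by auto
  qed (use y in \<open>auto simp: blocks_def\<close>)
  moreover have "PiE {..<M} (\<lambda>k. {y k}) \<in> sets (blockspace M)"
    unfolding blockspace_def by (intro sets_PiM_I_finite) auto
  ultimately show ?thesis by simp
qed

lemma measurable_block: "j < M \<Longrightarrow> (\<lambda>x. x j) \<in> borel_measurable (blockspace M)"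
  unfolding blockspace_def using measurable_component_singleton[of j "{..<M}" "\<lambda>_. borel"] by simp

lemma discrete_measure_eq_distr:
  "discrete_measure np p xi = distr (point_measure {1..np} (\<lambda>j. ennreal (p j))) borel xi"
    (is "_ = distr ?D borel xi")
proof -
  have "emeasure (distr ?D borel xi) A = (\<Sum>j\<in>{1..np}. ennreal (p j) * indicator A (xi j))"
    if "A \<in> sets borel" for A
  proof -
    have "emeasure (distr ?D borel xi) A = (\<Sum>j\<in>xi -` A \<inter> {1..np}. ennreal (p j))"
      using that by (simp add: emeasure_distr space_point_measure emeasure_point_measure_finite)
    also have "\<dots> = (\<Sum>j\<in>{1..np}. ennreal (p j) * indicator A (xi j))"
      by (rule sum.mono_neutral_cong_left) (auto simp: indicator_def)
    finally show ?thesis .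
  qed
  then have "measure_of UNIV (sets borel) (emeasure (distr ?D borel xi)) = discrete_measure np p xi"
    unfolding discrete_measure_def
    by (intro measure_of_eq) (simp_all add: sets.sigma_sets_eq[of borel, simplified])
  moreover have "measure_of UNIV (sets borel) (emeasure (distr ?D borel xi)) = distr ?D borel xi"
    using measure_of_of_measure[of "distr ?D borel xi"] by simp
  ultimately show ?thesis by simp
qed

lemma sets_discrete_measure: "sets (discrete_measure np p xi) = sets borel"
  unfolding discrete_measure_eq_distr by simp

lemma emeasure_discrete_measure:
  "A \<in> sets borel \<Longrightarrow> emeasure (discrete_measure np p xi) A = (\<Sum>j\<in>{1..np}. ennreal (p j) * indicator A (xi j))"
  unfolding discrete_measure_eq_distr
  by (simp add: emeasure_distr space_point_measure emeasure_point_measure_finite)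
    (rule sum.mono_neutral_cong_left; auto simp: indicator_def)

lemma prob_space_discrete_measure:
  assumes "\<forall>j\<in>{1..np}. 0 \<le> p j" "(\<Sum>j\<in>{1..np}. p j) = 1"
  shows "prob_space (discrete_measure np p xi)"
proof -
  have "(\<Sum>j\<in>{1..np}. ennreal (p j)) = 1"
    using assms by (subst sum_ennreal) auto
  then have "prob_space (point_measure {1..np} (\<lambda>j. ennreal (p j)))"
    by (intro prob_space_point_measure) auto
  then show ?thesis unfolding discrete_measure_eq_distr by (rule prob_space.prob_space_distr) simp
qed

locale sym_dro =
  fixes nrm :: "real^'n \<Rightarrow> real"
    and M N np :: nat
    and \<rho> :: real
    and p :: "nat \<Rightarrow> real"
    and xi :: "nat \<Rightarrow> real^'n"
    and H :: "((nat \<Rightarrow> real^'n) \<times> real) set"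
    and \<upsilon> :: "(nat \<Rightarrow> nat) set \<Rightarrow> (nat \<Rightarrow> nat)"
    and V :: "((nat \<Rightarrow> real^'n) \<times> real) set"
  assumes rho: "\<rho> > 0"
    and N1: "1 \<le> N" and NM: "N \<le> M"
    and p_pos: "\<forall>i\<in>{1..np}. p i > 0" and p_sum: "(\<Sum>i\<in>{1..np}. p i) = 1"
    and nrm: "is_norm nrm"
    and V: "finite V" "V \<noteq> {}" "V \<subseteq> blocks N \<times> UNIV"
    and HV: "H = {((\<lambda>k. if k < N then (\<Sum>v\<in>V. w v *\<^sub>R fst v k) else undefined),
           (\<Sum>v\<in>V. w v * snd v)) | w. (\<forall>v\<in>V. 0 \<le> w v) \<and> (\<Sum>v\<in>V. w v) = 1}"
    and \<upsilon>: "\<forall>\<iota>\<in>Icls M np. \<upsilon> \<iota> \<in> \<iota>"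
begin

abbreviation "L \<equiv> Lset M N"
abbreviation "atom \<equiv> xi_tuple M xi"
abbreviation "nominal \<equiv> PiM {..<M} (\<lambda>_. discrete_measure np p xi)"

definition "\<kappa> = fact (M - N) / (fact M :: real)"
definition "tuple_prob i = (\<Prod>k<M. p (i k))"
definition "index_measure = point_measure (Ihat M np) (\<lambda>i. ennreal (tuple_prob i))"

lemma \<kappa>_nonneg [simp]: "0 \<le> \<kappa>"
  unfolding \<kappa>_def by simp

lemma sym_loss_eq: "sym_loss M N H x = \<kappa> * (\<Sum>l\<in>L. loss N H (\<lambda>k. x (l k)))"
  unfolding \<kappa>_def by (rule sym_loss_eq_sum_Lset[OF NM])

lemma tuple_prob_nonneg: "i \<in> Ihat M np \<Longrightarrow> 0 \<le> tuple_prob i"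
  unfolding tuple_prob_def using prod_pos_Ihat[OF p_pos] by (simp add: less_imp_le)

lemma p_cls_nonneg: "\<iota> \<in> Icls M np \<Longrightarrow> 0 \<le> p_cls M p \<iota>"
  using p_cls_pos[OF p_pos] by (simp add: less_imp_le)

lemma sum_tuple_prob_regroup:
  "(\<Sum>i\<in>Ihat M np. tuple_prob i * F (class_of M np i)) = (\<Sum>\<iota>\<in>Icls M np. p_cls M p \<iota> * F \<iota>)"
  unfolding tuple_prob_def p_cls_def by (rule sum_Ihat_regroup)

lemma costM_nonneg: "0 \<le> costM nrm M x y"
  unfolding costM_def using norm_nonneg[OF nrm] by (simp add: sum_nonneg)

lemma space_index_measure: "space index_measure = Ihat M np"
  unfolding index_measure_def by (simp add: space_point_measure)

lemma prob_space_index_measure: "prob_space index_measure"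
  unfolding index_measure_def
proof (rule prob_space_point_measure[OF finite_Ihat])
  show "(\<Sum>s\<in>Ihat M np. ennreal (tuple_prob s)) = 1"
    using sum_Ihat_prod[OF p_sum] tuple_prob_nonneg by (subst sum_ennreal) (auto simp: tuple_prob_def)
qed auto

lemma integral_index_measure: "integral\<^sup>L index_measure f = (\<Sum>i\<in>Ihat M np. tuple_prob i * f i)"
  unfolding index_measure_def
  using lebesgue_integral_point_measure_finite[of "Ihat M np" tuple_prob f] tuple_prob_nonneg finite_Ihat by simp

lemma nn_integral_index_measure:
  "integral\<^sup>N index_measure f = (\<Sum>i\<in>Ihat M np. ennreal (tuple_prob i) * f i)"
  unfolding index_measure_def by (rule nn_integral_point_measure_finite[OF finite_Ihat])

lemma measurable_index_measure: "(\<And>i. g i \<in> space N') \<Longrightarrow> g \<in> index_measure \<rightarrow>\<^sub>M N'"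
  unfolding index_measure_def by simp

lemma atom_in_blocks: "atom i \<in> blocks M"
  unfolding xi_tuple_def blocks_def by simp

lemma atom_measurable: "atom \<in> index_measure \<rightarrow>\<^sub>M blockspace M"
  using atom_in_blocks by (intro measurable_index_measure) (simp add: space_blockspace)

lemma sets_nominal: "sets nominal = sets (blockspace M)"
  unfolding blockspace_def by (rule sets_PiM_cong) (simp_all add: sets_discrete_measure)

lemma emeasure_index_measure_atom_PiE:
  assumes A: "\<And>k. k < M \<Longrightarrow> A k \<in> sets borel"
  shows "emeasure (distr index_measure (blockspace M) atom) (PiE {..<M} A)
       = (\<Prod>k<M. emeasure (discrete_measure np p xi) (A k))"
proof -
  have "PiE {..<M} A \<in> sets (blockspace M)"
    unfolding blockspace_def using A by (intro sets_PiM_I_finite) auto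
  then have "emeasure (distr index_measure (blockspace M) atom) (PiE {..<M} A)
      = emeasure index_measure (atom -` PiE {..<M} A \<inter> Ihat M np)"
    by (simp add: emeasure_distr[OF atom_measurable] space_index_measure)
  also have "\<dots> = (\<Sum>i\<in>atom -` PiE {..<M} A \<inter> Ihat M np. ennreal (tuple_prob i))"
    unfolding index_measure_def by (rule emeasure_point_measure_finite[OF finite_Ihat]) auto
  also have "\<dots> = (\<Sum>i\<in>Ihat M np. \<Prod>k<M. ennreal (p (i k)) * indicator (A k) (xi (i k)))"
  proof (rule sum.mono_neutral_cong_left[OF finite_Ihat])
    show "\<forall>i\<in>Ihat M np - atom -` PiE {..<M} A \<inter> Ihat M np.
        (\<Prod>k<M. ennreal (p (i k)) * indicator (A k) (xi (i k))) = 0"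
    proof
      fix i assume "i \<in> Ihat M np - atom -` PiE {..<M} A \<inter> Ihat M np"
      then obtain k where "k < M" "xi (i k) \<notin> A k" by (auto simp: xi_tuple_def PiE_def Pi_def)
      then show "(\<Prod>k<M. ennreal (p (i k)) * indicator (A k) (xi (i k))) = 0"
        by (intro prod_zero bexI[of _ k]) auto
    qed
    fix i assume i: "i \<in> atom -` PiE {..<M} A \<inter> Ihat M np"
    then have "\<forall>k<M. xi (i k) \<in> A k \<and> 0 \<le> p (i k)"
      using p_pos unfolding xi_tuple_def Ihat_def by (auto simp: PiE_def Pi_def less_imp_le)
    then show "ennreal (tuple_prob i) = (\<Prod>k<M. ennreal (p (i k)) * indicator (A k) (xi (i k)))"
      unfolding tuple_prob_def by (subst prod_ennreal[symmetric]) auto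
  qed auto
  also have "\<dots> = (\<Prod>k<M. \<Sum>j\<in>{1..np}. ennreal (p j) * indicator (A k) (xi j))"
    unfolding Ihat_def by (rule prod_sum_PiE[symmetric]) auto
  also have "\<dots> = (\<Prod>k<M. emeasure (discrete_measure np p xi) (A k))"
    using A by (simp add: emeasure_discrete_measure)
  finally show ?thesis .
qed

lemma nominal_eq_distr: "nominal = distr index_measure (blockspace M) atom"
proof -
  have "prob_space (discrete_measure np p xi)"
    using p_pos p_sum by (intro prob_space_discrete_measure) (auto simp: less_imp_le)
  then interpret product_sigma_finite "\<lambda>_. discrete_measure np p xi"
    unfolding product_sigma_finite_def by (simp add: prob_space_imp_sigma_finite)
  have "distr index_measure (blockspace M) atom = nominal"
  proof (rule PiM_eqI)
    show "sets (distr index_measure (blockspace M) atom) = sets nominal" using sets_nominal by simp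
  qed (simp_all add: sets_discrete_measure emeasure_index_measure_atom_PiE)
  then show ?thesis by simp
qed

lemma integral_nominal:
  "f \<in> borel_measurable (blockspace M) \<Longrightarrow> (\<integral>y. f y \<partial>nominal) = (\<Sum>i\<in>Ihat M np. tuple_prob i * f (atom i))"
  unfolding nominal_eq_distr by (simp add: integral_distr[OF atom_measurable] integral_index_measure)

lemma integrable_nominal:
  assumes "f \<in> borel_measurable (blockspace M)"
  shows "integrable nominal (f :: _ \<Rightarrow> real)"
proof -
  have "integrable index_measure (\<lambda>i. f (atom i))"
    unfolding index_measure_def by (rule integrable_point_measure_finite[OF finite_Ihat])
  then show ?thesis unfolding nominal_eq_distr using integrable_distr_eq[OF atom_measurable assms] by simp
qed

end

context sym_dro
begin

lemma affine_value_measurable: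
  assumes "l \<in> L"
  shows "(\<lambda>x. affine_value N v (\<lambda>k. x (l k))) \<in> borel_measurable (blockspace M)"
proof -
  have "(\<lambda>x. x (l k)) \<in> borel_measurable (blockspace M)" if "k < N" for k
    using Lset_less[OF assms that] by (rule measurable_block)
  then show ?thesis
    unfolding affine_value_def by (intro borel_measurable_add borel_measurable_sum borel_measurable_inner) auto
qed

lemma sym_loss_measurable: "sym_loss M N H \<in> borel_measurable (blockspace M)"
proof -
  have "sym_loss M N H = (\<lambda>x. \<kappa> * (\<Sum>l\<in>L. Min ((\<lambda>v. affine_value N v (\<lambda>k. x (l k))) ` V)))"
    unfolding sym_loss_eq loss_eq_Min_vertices[OF V HV] ..
  also have "\<dots> \<in> borel_measurable (blockspace M)"
    by (intro borel_measurable_times borel_measurable_const borel_measurable_sum borel_measurable_Min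
        V(1) affine_value_measurable)
  finally show ?thesis .
qed

lemma costM_measurable:
  "(\<lambda>z. costM nrm M (fst z) (snd z)) \<in> borel_measurable (blockspace M \<Otimes>\<^sub>M blockspace M)"
  unfolding costM_def
proof (intro borel_measurable_sum)
  fix i assume "i \<in> {..<M}"
  then have "(\<lambda>z. fst z i - snd z i) \<in> borel_measurable (blockspace M \<Otimes>\<^sub>M blockspace M)"
    by (intro borel_measurable_diff measurable_compose[OF measurable_fst measurable_block]
        measurable_compose[OF measurable_snd measurable_block]) auto
  then show "(\<lambda>z. nrm (fst z i - snd z i)) \<in> borel_measurable (blockspace M \<Otimes>\<^sub>M blockspace M)"
    by (rule borel_measurable_continuous_on[OF continuous_on_norm[OF nrm]])
qed

lemma block_norm_sum_measurable: "(\<lambda>x. \<Sum>j<M. norm (x j)) \<in> borel_measurable (blockspace M)"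
  by (intro borel_measurable_sum borel_measurable_continuous_on[where f = norm] continuous_on_norm_id
      measurable_block) auto

lemma sym_loss_linear_growth: "\<exists>A B. \<forall>x. \<bar>sym_loss M N H x\<bar> \<le> A + B * (\<Sum>j<M. norm (x j))"
proof -
  obtain A B where AB: "\<forall>y. \<bar>loss N H y\<bar> \<le> A + B * (\<Sum>k<N. norm (y k))"
    using loss_linear_growth[OF V HV] by blast
  define B' where "B' = max B 0"
  have AB': "\<bar>loss N H y\<bar> \<le> A + B' * (\<Sum>k<N. norm (y k))" for y
    using AB[rule_format, of y] unfolding B'_def by (smt (verit) mult_right_mono sum_nonneg norm_ge_zero)
  have sub: "(\<Sum>k<N. norm (x (l k))) \<le> (\<Sum>j<M. norm (x j))" if l: "l \<in> L" for l x
  proof -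
    have "(\<Sum>k<N. norm (x (l k))) = (\<Sum>j\<in>l ` {..<N}. norm (x j))"
      using l unfolding Lset_def by (simp add: sum.reindex)
    also have "\<dots> \<le> (\<Sum>j<M. norm (x j))"
      by (rule sum_mono2) (use Lset_less[OF l] in auto)
    finally show ?thesis .
  qed
  have "\<bar>sym_loss M N H x\<bar> \<le> \<kappa> * card L * A + \<kappa> * card L * B' * (\<Sum>j<M. norm (x j))" for x
  proof -
    have "\<bar>sym_loss M N H x\<bar> = \<kappa> * \<bar>\<Sum>l\<in>L. loss N H (\<lambda>k. x (l k))\<bar>"
      unfolding sym_loss_eq abs_mult by simp
    also have "\<dots> \<le> \<kappa> * (\<Sum>l\<in>L. \<bar>loss N H (\<lambda>k. x (l k))\<bar>)"
      by (rule mult_left_mono[OF sum_abs]) simp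
    also have "\<dots> \<le> \<kappa> * (\<Sum>l\<in>L. A + B' * (\<Sum>j<M. norm (x j)))"
      by (intro mult_left_mono sum_mono order.trans[OF AB'] add_left_mono mult_left_mono sub)
        (auto simp: B'_def)
    finally show ?thesis by (simp add: algebra_simps)
  qed
  then show ?thesis by blast
qed

lemma integrable_sym_loss:
  assumes P: "P \<in> finite_first_moment_probs M"
  shows "integrable P (sym_loss M N H)"
proof -
  have sP: "sets P = sets (blockspace M)" and fin: "(\<integral>\<^sup>+ x. ennreal (\<Sum>i<M. norm (x i)) \<partial>P) < \<infinity>"
    using P unfolding finite_first_moment_probs_def by auto
  interpret prob_space P using P unfolding finite_first_moment_probs_def by auto
  obtain A B where AB: "\<forall>x. \<bar>sym_loss M N H x\<bar> \<le> A + B * (\<Sum>j<M. norm (x j))"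
    using sym_loss_linear_growth by blast
  have "integrable P (\<lambda>x. \<Sum>j<M. norm (x j))"
    using block_norm_sum_measurable measurable_cong_sets[OF sP refl] fin
    by (intro integrableI_nonneg) (auto intro!: sum_nonneg)
  then have "integrable P (\<lambda>x. A + B * (\<Sum>j<M. norm (x j)))" by simp
  then show ?thesis
  proof (rule Bochner_Integration.integrable_bound)
    show "sym_loss M N H \<in> borel_measurable P"
      using sym_loss_measurable measurable_cong_sets[OF sP refl] by blast
    show "AE x in P. norm (sym_loss M N H x) \<le> norm (A + B * (\<Sum>j<M. norm (x j)))"
      using AB by (auto intro!: AE_I2 order.trans[OF _ abs_ge_self])
  qed
qed

end

section \<open>Weak duality\<close>

context sym_dro
begin

definition class_feasible :: "real \<Rightarrow> (nat \<Rightarrow> real^'n) \<Rightarrow> real \<Rightarrow> (nat \<Rightarrow> real^'n)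
    \<Rightarrow> ((nat \<Rightarrow> nat) \<Rightarrow> nat \<Rightarrow> real^'n) \<Rightarrow> ((nat \<Rightarrow> nat) \<Rightarrow> real) \<Rightarrow> bool" where
  "class_feasible \<mu> \<xi> \<sigma>0 z a b \<longleftrightarrow>
     0 \<le> \<sigma>0 + (\<Sum>j<M. z j \<bullet> \<xi> j) + \<kappa> * (\<Sum>l\<in>L. b l)
     \<and> (\<forall>j<M. dual_norm nrm (z j) \<le> \<mu>)
     \<and> z = (\<lambda>j. if j < M then \<kappa> *\<^sub>R (\<Sum>l\<in>L. selT M N l (a l) j) else undefined)
     \<and> (\<forall>l\<in>L. ((\<lambda>k. if k < N then - a l k else undefined), - b l) \<in> H)"

lemma dual_values_eq:
  "dual_values nrm M N \<rho> np p xi H \<upsilon> =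
     {ereal (\<mu> * real M * \<rho> + (\<Sum>\<iota>\<in>Icls M np. p_cls M p \<iota> * \<sigma> \<iota>)) | \<mu> \<sigma> z a b.
        0 \<le> \<mu> \<and> (\<forall>\<iota>\<in>Icls M np. class_feasible \<mu> (atom (\<upsilon> \<iota>)) (\<sigma> \<iota>) (z \<iota>) (\<lambda>l. a l \<iota>) (\<lambda>l. b l \<iota>))}"
  unfolding dual_values_def class_feasible_def \<kappa>_def ..

lemma sym_loss_le_of_class_feasible:
  assumes "class_feasible \<mu> \<xi> \<sigma>0 z a b"
  shows "sym_loss M N H x \<le> \<mu> * costM nrm M x \<xi> + \<sigma>0"
proof -
  have nonneg: "0 \<le> \<sigma>0 + (\<Sum>j<M. z j \<bullet> \<xi> j) + \<kappa> * (\<Sum>l\<in>L. b l)"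
    and dual: "\<forall>j<M. dual_norm nrm (z j) \<le> \<mu>"
    and z: "z = (\<lambda>j. if j < M then \<kappa> *\<^sub>R (\<Sum>l\<in>L. selT M N l (a l) j) else undefined)"
    and in_H: "\<forall>l\<in>L. ((\<lambda>k. if k < N then - a l k else undefined), - b l) \<in> H"
    using assms unfolding class_feasible_def by blast+
  have "loss N H (\<lambda>k. x (l k)) \<le> - (\<Sum>k<N. a l k \<bullet> x (l k)) - b l" if "l \<in> L" for l
  proof -
    have "loss N H (\<lambda>k. x (l k))
        \<le> affine_value N ((\<lambda>k. if k < N then - a l k else undefined), - b l) (\<lambda>k. x (l k))"
      using in_H that by (intro loss_le_affine_value[OF V HV]) auto
    then show ?thesis unfolding affine_value_def by (simp add: sum_negf)
  qed
  then have "sym_loss M N H x \<le> \<kappa> * (\<Sum>l\<in>L. - (\<Sum>k<N. a l k \<bullet> x (l k)) - b l)"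
    unfolding sym_loss_eq by (intro mult_left_mono sum_mono) auto
  also have "\<dots> = - (\<Sum>j<M. z j \<bullet> x j) - \<kappa> * (\<Sum>l\<in>L. b l)"
    using inner_sum_selT[OF z] by (simp add: sum_subtractf sum_negf algebra_simps)
  also have "\<dots> \<le> \<sigma>0 + (\<Sum>j<M. z j \<bullet> (\<xi> j - x j))"
    using nonneg by (simp add: inner_diff_right sum_subtractf)
  also have "(\<Sum>j<M. z j \<bullet> (\<xi> j - x j)) \<le> (\<Sum>j<M. \<mu> * nrm (x j - \<xi> j))"
  proof (rule sum_mono)
    fix j assume "j \<in> {..<M}"
    have "z j \<bullet> (\<xi> j - x j) \<le> dual_norm nrm (z j) * nrm (\<xi> j - x j)"
      by (rule inner_le_dual_norm_mult[OF nrm])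
    also have "\<dots> \<le> \<mu> * nrm (\<xi> j - x j)"
      using dual \<open>j \<in> {..<M}\<close> norm_nonneg[OF nrm] by (intro mult_right_mono) auto
    finally show "z j \<bullet> (\<xi> j - x j) \<le> \<mu> * nrm (x j - \<xi> j)" by (simp add: norm_minus_commute[OF nrm])
  qed
  finally show ?thesis unfolding costM_def by (simp add: sum_distrib_left add.commute)
qed

text \<open>
  The constraints are written for the representative \<open>\<upsilon> \<iota>\<close> only; since the symmetrized loss and
  the cost are invariant under a common permutation of the blocks, the bound transfers to every
  member of the class.\<close>

lemma sym_loss_le_of_class_feasible_member:
  assumes "\<iota> \<in> Icls M np" "i \<in> \<iota>" and feas: "class_feasible \<mu> (atom (\<upsilon> \<iota>)) \<sigma>0 z a b"
  shows "sym_loss M N H x \<le> \<mu> * costM nrm M x (atom i) + \<sigma>0"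
proof -
  obtain \<pi> where \<pi>: "\<pi> permutes {..<M}" "\<forall>k<M. i k = \<upsilon> \<iota> (\<pi> k)"
    using permutation_within_class[OF assms(1,2)] \<upsilon> assms(1) by blast
  define x' where "x' k = x (inv \<pi> k)" for k
  have "costM nrm M x (atom i) = costM nrm M (\<lambda>k. x' (\<pi> k)) (\<lambda>k. atom (\<upsilon> \<iota>) (\<pi> k))"
    unfolding costM_def x'_def xi_tuple_def
    using \<pi>(2) permutes_inverses(2)[OF \<pi>(1)] permutes_in_image[OF \<pi>(1)] by (intro sum.cong refl) auto
  also have "\<dots> = costM nrm M x' (atom (\<upsilon> \<iota>))" by (rule costM_permute[OF \<pi>(1)])
  finally have "costM nrm M x (atom i) = costM nrm M x' (atom (\<upsilon> \<iota>))" .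
  moreover have "sym_loss M N H x' = sym_loss M N H x"
    unfolding x'_def by (rule sym_loss_permute[OF permutes_inv[OF \<pi>(1)]])
  ultimately show ?thesis using sym_loss_le_of_class_feasible[OF feas, of x'] by simp
qed

lemma atoms_in_blockspace: "atom ` Ihat M np \<in> sets (blockspace M)"
proof -
  have "(\<Union>i\<in>Ihat M np. {atom i}) \<in> sets (blockspace M)"
    by (intro sets.finite_UN finite_Ihat singleton_in_blockspace atom_in_blocks)
  then show ?thesis by (simp add: UNION_singleton_eq_range)
qed

text \<open>
  Several tuples may share the same atom, so the majorant takes the smallest admissible
  \<open>\<sigma>\<close> over them.\<close>

lemma support_majorant:
  assumes pt: "\<And>i x. i \<in> Ihat M np \<Longrightarrow> sym_loss M N H x \<le> \<mu> * costM nrm M x (atom i) + \<sigma> (class_of M np i)"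
  obtains s where "s \<in> borel_measurable (blockspace M)"
    and "\<And>i. i \<in> Ihat M np \<Longrightarrow> s (atom i) \<le> \<sigma> (class_of M np i)"
    and "\<And>x y. y \<in> atom ` Ihat M np \<Longrightarrow> sym_loss M N H x \<le> \<mu> * costM nrm M x y + s y"
proof
  define S where "S = atom ` Ihat M np"
  define m where "m y = Min ((\<lambda>i. \<sigma> (class_of M np i)) ` {i\<in>Ihat M np. atom i = y})" for y
  define s where "s y = (\<Sum>y0\<in>S. indicator {y0} y * m y0)" for y
  have "finite S" unfolding S_def using finite_Ihat by simp
  have s_S: "s y = m y" if "y \<in> S" for y
    using that \<open>finite S\<close> unfolding s_def by (simp add: indicator_def sum.delta' cong: if_cong)
  show "s \<in> borel_measurable (blockspace M)"
    unfolding s_def S_def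
    by (intro borel_measurable_sum borel_measurable_times borel_measurable_const borel_measurable_indicator
        singleton_in_blockspace) (auto simp: atom_in_blocks)
  show "s (atom i) \<le> \<sigma> (class_of M np i)" if "i \<in> Ihat M np" for i
    using that finite_Ihat unfolding s_S[of "atom i", unfolded S_def, OF imageI[OF that]] m_def
    by (intro Min_le) auto
  fix x y assume y: "y \<in> atom ` Ihat M np"
  then have "m y \<in> (\<lambda>i. \<sigma> (class_of M np i)) ` {i\<in>Ihat M np. atom i = y}"
    unfolding m_def using finite_Ihat[of M np] by (intro Min_in) auto
  then obtain i where "i \<in> Ihat M np" "atom i = y" "m y = \<sigma> (class_of M np i)" by auto
  then show "sym_loss M N H x \<le> \<mu> * costM nrm M x y + s y"
    using pt s_S y unfolding S_def by metis
qed

lemma AE_coupling_atoms: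
  assumes "\<pi> \<in> couplings M P nominal"
  shows "AE z in \<pi>. snd z \<in> atom ` Ihat M np"
proof -
  have s\<pi>: "sets \<pi> = sets (blockspace M \<Otimes>\<^sub>M blockspace M)"
    and snd\<pi>: "distr \<pi> (blockspace M) snd = nominal"
    using assms unfolding couplings_def by auto
  have msnd: "snd \<in> \<pi> \<rightarrow>\<^sub>M blockspace M"
    using measurable_cong_sets[OF s\<pi> refl] measurable_snd by blast
  have atoms: "{y \<in> space (blockspace M). y \<in> atom ` Ihat M np} \<in> sets (blockspace M)"
    using atoms_in_blockspace atom_in_blocks by (simp add: space_blockspace image_subset_iff Collect_conj_eq Int_absorb1)
  have "AE y in nominal. y \<in> atom ` Ihat M np"
    unfolding nominal_eq_distr
    by (subst AE_distr_iff[OF atom_measurable atoms]) (auto simp: space_index_measure intro!: AE_I2)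
  then show ?thesis
    unfolding snd\<pi>[symmetric] by (subst (asm) AE_distr_iff[OF msnd atoms])
qed

lemma integral_le_coupling:
  assumes P: "P \<in> finite_first_moment_probs M"
    and \<pi>: "\<pi> \<in> couplings M P nominal"
    and finite_cost: "(\<integral>\<^sup>+ z. ennreal (costM nrm M (fst z) (snd z)) \<partial>\<pi>) < \<infinity>"
    and "0 \<le> \<mu>"
    and pt: "\<And>i x. i \<in> Ihat M np \<Longrightarrow> sym_loss M N H x \<le> \<mu> * costM nrm M x (atom i) + \<sigma> (class_of M np i)"
  shows "(\<integral>x. sym_loss M N H x \<partial>P)
       \<le> \<mu> * (\<integral>z. costM nrm M (fst z) (snd z) \<partial>\<pi>) + (\<Sum>\<iota>\<in>Icls M np. p_cls M p \<iota> * \<sigma> \<iota>)"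
proof -
  obtain s where s_meas: "s \<in> borel_measurable (blockspace M)"
    and s_le: "\<And>i. i \<in> Ihat M np \<Longrightarrow> s (atom i) \<le> \<sigma> (class_of M np i)"
    and s_bound: "\<And>x y. y \<in> atom ` Ihat M np \<Longrightarrow> sym_loss M N H x \<le> \<mu> * costM nrm M x y + s y"
    using support_majorant[OF pt] by metis
  have s\<pi>: "sets \<pi> = sets (blockspace M \<Otimes>\<^sub>M blockspace M)"
    and fst\<pi>: "distr \<pi> (blockspace M) fst = P" and snd\<pi>: "distr \<pi> (blockspace M) snd = nominal"
    using \<pi> unfolding couplings_def by auto
  interpret prob_space \<pi> using \<pi> unfolding couplings_def by auto
  have mfst: "fst \<in> \<pi> \<rightarrow>\<^sub>M blockspace M" and msnd: "snd \<in> \<pi> \<rightarrow>\<^sub>M blockspace M"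
    using measurable_cong_sets[OF s\<pi> refl] measurable_fst measurable_snd by blast+
  have mcost: "(\<lambda>z. costM nrm M (fst z) (snd z)) \<in> borel_measurable \<pi>"
    using measurable_cong_sets[OF s\<pi> refl] costM_measurable by blast
  have int_loss: "integrable \<pi> (\<lambda>z. sym_loss M N H (fst z))"
    using integrable_distr_eq[OF mfst sym_loss_measurable] integrable_sym_loss[OF P] fst\<pi> by simp
  have int_cost: "integrable \<pi> (\<lambda>z. costM nrm M (fst z) (snd z))"
    using finite_cost costM_nonneg by (intro integrableI_nonneg[OF mcost]) (auto simp: less_top)
  have int_s: "integrable \<pi> (\<lambda>z. s (snd z))"
    using integrable_distr_eq[OF msnd s_meas] integrable_nominal[OF s_meas] snd\<pi> by simp
  have AE_bound: "AE z in \<pi>. sym_loss M N H (fst z) \<le> \<mu> * costM nrm M (fst z) (snd z) + s (snd z)"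
    using AE_coupling_atoms[OF \<pi>] by eventually_elim (rule s_bound)
  have "(\<integral>x. sym_loss M N H x \<partial>P) = (\<integral>z. sym_loss M N H (fst z) \<partial>\<pi>)"
    using integral_distr[OF mfst sym_loss_measurable] fst\<pi> by simp
  also have "\<dots> \<le> (\<integral>z. \<mu> * costM nrm M (fst z) (snd z) + s (snd z) \<partial>\<pi>)"
    using int_cost int_s by (intro integral_mono_AE[OF int_loss _ AE_bound]) simp
  also have "\<dots> = \<mu> * (\<integral>z. costM nrm M (fst z) (snd z) \<partial>\<pi>) + (\<integral>y. s y \<partial>nominal)"
    using int_cost int_s integral_distr[OF msnd s_meas] snd\<pi> by simp
  also have "(\<integral>y. s y \<partial>nominal) \<le> (\<Sum>\<iota>\<in>Icls M np. p_cls M p \<iota> * \<sigma> \<iota>)"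
    unfolding integral_nominal[OF s_meas] sum_tuple_prob_regroup[symmetric]
    by (intro sum_mono mult_left_mono s_le tuple_prob_nonneg)
  finally show ?thesis by simp
qed

lemma weak_duality:
  assumes P: "P \<in> ot_ball nrm M (real M * \<rho>) nominal"
    and "0 \<le> \<mu>"
    and pt: "\<And>i x. i \<in> Ihat M np \<Longrightarrow> sym_loss M N H x \<le> \<mu> * costM nrm M x (atom i) + \<sigma> (class_of M np i)"
  shows "(\<integral>x. sym_loss M N H x \<partial>P) \<le> \<mu> * real M * \<rho> + (\<Sum>\<iota>\<in>Icls M np. p_cls M p \<iota> * \<sigma> \<iota>)"
proof (rule field_le_epsilon)
  fix e :: real assume "0 < e"
  define d where "d = e / (\<mu> + 1)"
  have "0 < d" "\<mu> * d \<le> e" using \<open>0 < e\<close> \<open>0 \<le> \<mu>\<close> unfolding d_def by (auto simp: field_simps)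
  have "0 \<le> real M * \<rho>" using rho by simp
  with P have P': "P \<in> finite_first_moment_probs M"
    and "ot_cost nrm M P nominal < ennreal (real M * \<rho> + d)"
    unfolding ot_ball_def using \<open>0 < d\<close> by (auto simp: ennreal_less_iff intro: order.strict_trans1)
  then obtain \<pi> where \<pi>: "\<pi> \<in> couplings M P nominal"
    and cl: "(\<integral>\<^sup>+ xy. ennreal (costM nrm M (fst xy) (snd xy)) \<partial>\<pi>) < ennreal (real M * \<rho> + d)"
    unfolding ot_cost_def by (auto simp: INF_less_iff)
  have mcost: "(\<lambda>z. costM nrm M (fst z) (snd z)) \<in> borel_measurable \<pi>"
    using \<pi> measurable_cong_sets[OF _ refl] costM_measurable unfolding couplings_def by blast
  have "(\<integral>z. costM nrm M (fst z) (snd z) \<partial>\<pi>) = enn2real (\<integral>\<^sup>+ z. ennreal (costM nrm M (fst z) (snd z)) \<partial>\<pi>)"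
    by (rule integral_eq_nn_integral[OF mcost]) (simp add: costM_nonneg)
  also have "\<dots> \<le> real M * \<rho> + d"
    using cl \<open>0 \<le> real M * \<rho>\<close> \<open>0 < d\<close>
    by (subst enn2real_le_iff) (auto simp: less_imp_le top_unique intro: order.strict_trans)
  finally have "\<mu> * (\<integral>z. costM nrm M (fst z) (snd z) \<partial>\<pi>) \<le> \<mu> * (real M * \<rho> + d)"
    using \<open>0 \<le> \<mu>\<close> by (rule mult_left_mono)
  moreover have "(\<integral>\<^sup>+ z. ennreal (costM nrm M (fst z) (snd z)) \<partial>\<pi>) < \<infinity>"
    using cl by (auto intro: order.strict_trans)
  ultimately show "(\<integral>x. sym_loss M N H x \<partial>P) \<le> \<mu> * real M * \<rho> + (\<Sum>\<iota>\<in>Icls M np. p_cls M p \<iota> * \<sigma> \<iota>) + e"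
    using integral_le_coupling[OF P' \<pi> _ \<open>0 \<le> \<mu>\<close> pt] \<open>\<mu> * d \<le> e\<close> by (simp add: algebra_simps)
qed

end

section \<open>Lagrangian relaxation\<close>

lemma convex_hypograph_region:
  fixes \<Phi> G :: "'a \<Rightarrow> real"
  assumes concave: "\<And>t x1 x2. t \<in> {0..1} \<Longrightarrow> (1 - t) * \<Phi> x1 + t * \<Phi> x2 \<le> \<Phi> (comb t x1 x2)"
    and convex: "\<And>t x1 x2. t \<in> {0..1} \<Longrightarrow> G (comb t x1 x2) \<le> (1 - t) * G x1 + t * G x2"
  shows "convex {st :: real \<times> real. \<exists>x. G x \<le> fst st \<and> snd st \<le> \<Phi> x}"
  unfolding convex_def
proof (intro ballI allI impI)
  fix a b :: "real \<times> real" and r1 r2 :: real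
  assume "a \<in> {st. \<exists>x. G x \<le> fst st \<and> snd st \<le> \<Phi> x}" "b \<in> {st. \<exists>x. G x \<le> fst st \<and> snd st \<le> \<Phi> x}"
    and r: "0 \<le> r1" "0 \<le> r2" "r1 + r2 = 1"
  then obtain x1 x2 where x1: "G x1 \<le> fst a" "snd a \<le> \<Phi> x1" and x2: "G x2 \<le> fst b" "snd b \<le> \<Phi> x2"
    by auto
  have t: "r2 \<in> {0..1}" and r1: "r1 = 1 - r2" using r by auto
  have "G (comb r2 x1 x2) \<le> r1 * fst a + r2 * fst b"
    using convex[OF t, of x1 x2] x1(1) x2(1) r mult_left_mono unfolding r1
    by (smt (verit, best) mult_left_mono)
  moreover have "r1 * snd a + r2 * snd b \<le> \<Phi> (comb r2 x1 x2)"
    using concave[OF t, of x1 x2] x1(2) x2(2) r unfolding r1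
    by (smt (verit, best) mult_left_mono)
  ultimately show "r1 *\<^sub>R a + r2 *\<^sub>R b \<in> {st. \<exists>x. G x \<le> fst st \<and> snd st \<le> \<Phi> x}"
    by auto
qed

lemma separating_functional_signs:
  fixes \<alpha> \<beta> :: real and \<Phi> G :: "'a \<Rightarrow> real"
  assumes key: "\<And>x s t. G x \<le> s \<Longrightarrow> t \<le> \<Phi> x \<Longrightarrow> 0 \<le> \<alpha> * (s - r) + \<beta> * (t - u)"
  shows "0 \<le> \<alpha>" and "\<beta> \<le> 0"
proof -
  fix x0 :: 'a
  show "0 \<le> \<alpha>"
  proof (rule ccontr)
    assume "\<not> 0 \<le> \<alpha>"
    define s where "s = max (G x0) (r + (\<beta> * (\<Phi> x0 - u) + 1) / (- \<alpha>))"
    have "0 \<le> \<alpha> * (s - r) + \<beta> * (\<Phi> x0 - u)" by (rule key) (auto simp: s_def)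
    moreover have "(\<beta> * (\<Phi> x0 - u) + 1) / (- \<alpha>) \<le> s - r" unfolding s_def by linarith
    then have "\<beta> * (\<Phi> x0 - u) + 1 \<le> (s - r) * - \<alpha>"
      using \<open>\<not> 0 \<le> \<alpha>\<close> by (subst (asm) pos_divide_le_eq) auto
    ultimately show False by (simp add: algebra_simps)
  qed
  show "\<beta> \<le> 0"
  proof (rule ccontr)
    assume "\<not> \<beta> \<le> 0"
    define t where "t = min (\<Phi> x0) (u - (\<alpha> * (G x0 - r) + 1) / \<beta>)"
    have "0 \<le> \<alpha> * (G x0 - r) + \<beta> * (t - u)" by (rule key) (auto simp: t_def)
    moreover have "t - u \<le> - (\<alpha> * (G x0 - r) + 1) / \<beta>" unfolding t_def by linarith
    then have "(t - u) * \<beta> \<le> - (\<alpha> * (G x0 - r) + 1)"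
      using \<open>\<not> \<beta> \<le> 0\<close> by (subst (asm) pos_le_divide_eq) auto
    ultimately show False by (simp add: algebra_simps)
  qed
qed

lemma multiplier_of_separating_functional:
  fixes \<alpha> \<beta> :: real and \<Phi> G :: "'a \<Rightarrow> real"
  assumes key: "\<And>x s t. G x \<le> s \<Longrightarrow> t \<le> \<Phi> x \<Longrightarrow> 0 \<le> \<alpha> * (s - r) + \<beta> * (t - u)"
    and "(\<alpha>, \<beta>) \<noteq> 0" and slater: "G x0 < r"
  shows "\<exists>\<mu>\<ge>0. \<forall>x. \<Phi> x - \<mu> * G x \<le> u - \<mu> * r"
proof -
  have signs: "0 \<le> \<alpha>" "\<beta> \<le> 0"
    using separating_functional_signs[where G = G and \<Phi> = \<Phi> and r = r and u = u, OF key] by auto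
  have "\<beta> \<noteq> 0"
  proof
    assume "\<beta> = 0"
    then have "\<alpha> > 0" using \<open>(\<alpha>, \<beta>) \<noteq> 0\<close> signs(1) by (auto simp: zero_prod_def)
    moreover have "0 \<le> \<alpha> * (G x0 - r)" using key[of x0 "G x0" "\<Phi> x0"] \<open>\<beta> = 0\<close> by simp
    ultimately show False using slater by (simp add: zero_le_mult_iff)
  qed
  with signs(2) have "\<beta> < 0" by simp
  define \<mu> where "\<mu> = \<alpha> / - \<beta>"
  have "0 \<le> \<mu>" unfolding \<mu>_def using signs(1) \<open>\<beta> < 0\<close> by (intro divide_nonneg_pos) auto
  moreover have "\<Phi> x - \<mu> * G x \<le> u - \<mu> * r" for x
  proof -
    have "0 \<le> (\<alpha> * (G x - r) + \<beta> * (\<Phi> x - u)) / - \<beta>"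
      using key[of x "G x" "\<Phi> x"] \<open>\<beta> < 0\<close> by (intro divide_nonneg_pos) auto
    also have "\<dots> = \<mu> * G x - \<mu> * r - (\<Phi> x - u)"
      unfolding \<mu>_def using \<open>\<beta> < 0\<close> by (simp add: field_simps)
    finally show ?thesis by linarith
  qed
  ultimately show ?thesis by blast
qed

text \<open>
  The multiplier comes from a hyperplane separating \<open>(r, u)\<close> from the convex region below the
  image of \<open>(G, \<Phi>)\<close>; the Slater point rules out a vertical hyperplane.\<close>

lemma lagrange_multiplier:
  fixes \<Phi> G :: "'a \<Rightarrow> real"
  assumes concave: "\<And>t x1 x2. t \<in> {0..1} \<Longrightarrow> (1 - t) * \<Phi> x1 + t * \<Phi> x2 \<le> \<Phi> (comb t x1 x2)"
    and convex: "\<And>t x1 x2. t \<in> {0..1} \<Longrightarrow> G (comb t x1 x2) \<le> (1 - t) * G x1 + t * G x2"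
    and slater: "G x0 < r"
    and bound: "\<And>x. G x \<le> r \<Longrightarrow> \<Phi> x < u"
  shows "\<exists>\<mu>\<ge>0. \<forall>x. \<Phi> x - \<mu> * G x \<le> u - \<mu> * r"
proof -
  define A where "A = {st :: real \<times> real. \<exists>x. G x \<le> fst st \<and> snd st \<le> \<Phi> x}"
  have "convex ((\<lambda>a. a - (r, u)) ` A)"
    unfolding A_def by (intro convex_translation_subtract convex_hypograph_region[OF concave convex])
  moreover have "0 \<notin> (\<lambda>a. a - (r, u)) ` A"
  proof
    assume "0 \<in> (\<lambda>a. a - (r, u)) ` A"
    then have "(r, u) \<in> A" by (auto simp: zero_prod_def)
    then obtain x where "G x \<le> r" "u \<le> \<Phi> x" unfolding A_def by auto
    then show False using bound by (simp add: not_less[symmetric])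
  qed
  ultimately obtain ab where "ab \<noteq> 0" and sep: "\<forall>y\<in>(\<lambda>a. a - (r, u)) ` A. 0 \<le> ab \<bullet> y"
    using separating_hyperplane_set_0 by blast
  obtain \<alpha> \<beta> where ab: "ab = (\<alpha>, \<beta>)" by (cases ab)
  have "0 \<le> \<alpha> * (s - r) + \<beta> * (t - u)" if "G x \<le> s" "t \<le> \<Phi> x" for x s t
    using sep that unfolding A_def ab by (force simp: inner_Pair)
  moreover have "(\<alpha>, \<beta>) \<noteq> 0" using \<open>ab \<noteq> 0\<close> unfolding ab .
  ultimately show ?thesis
    by (rule multiplier_of_separating_functional[where G = G and \<Phi> = \<Phi>, OF _ _ slater])
qed

lemma bdd_above_of_weighted_sum_le:
  fixes F :: "'i \<Rightarrow> 'a \<Rightarrow> real"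
  assumes "finite I" "i0 \<in> I" "0 < p i0"
    and bound: "\<And>x. (\<Sum>i\<in>I. p i * F i (x i)) \<le> c"
  shows "bdd_above (range (F i0))"
proof -
  define R where "R = (\<Sum>i\<in>I - {i0}. p i * F i undefined)"
  have "F i0 y \<le> (c - R) / p i0" for y
  proof -
    define x :: "'i \<Rightarrow> 'a" where "x i = (if i = i0 then y else undefined)" for i
    have "(\<Sum>i\<in>I. p i * F i (x i)) = p i0 * F i0 (x i0) + (\<Sum>i\<in>I - {i0}. p i * F i (x i))"
      by (rule sum.remove[OF assms(1,2)])
    also have "(\<Sum>i\<in>I - {i0}. p i * F i (x i)) = R"
      unfolding R_def x_def by (rule sum.cong) auto
    finally have "p i0 * F i0 y \<le> c - R" using bound[of x] by (simp add: x_def)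
    then show ?thesis using \<open>0 < p i0\<close> by (simp add: field_simps)
  qed
  then show ?thesis by (rule bdd_aboveI2)
qed

lemma weighted_sum_SUP_le:
  fixes F :: "'i \<Rightarrow> 'a \<Rightarrow> real"
  assumes "finite I" "\<And>i. i \<in> I \<Longrightarrow> 0 < p i"
    and bound: "\<And>x. (\<Sum>i\<in>I. p i * F i (x i)) \<le> c"
  shows "(\<Sum>i\<in>I. p i * (SUP y. F i y)) \<le> c"
proof (rule field_le_epsilon)
  fix e :: real assume "0 < e"
  define d where "d = e / (sum p I + 1)"
  have "0 \<le> sum p I" using assms(2) by (intro sum_nonneg) (simp add: less_imp_le)
  then have "0 < d" "d * (sum p I + 1) = e" using \<open>0 < e\<close> unfolding d_def by simp_all
  moreover have "sum p I * d \<le> d * (sum p I + 1)" using \<open>0 < d\<close> by (simp add: algebra_simps)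
  ultimately have "sum p I * d \<le> e" by simp
  have "\<forall>i\<in>I. \<exists>y. (SUP y. F i y) - d < F i y"
  proof
    fix i assume "i \<in> I"
    have "bdd_above (range (F i))"
      using bdd_above_of_weighted_sum_le[OF assms(1) \<open>i \<in> I\<close> assms(2)[OF \<open>i \<in> I\<close>] bound] .
    moreover have "(SUP y. F i y) - d < (SUP y. F i y)" using \<open>0 < d\<close> by simp
    ultimately show "\<exists>y. (SUP y. F i y) - d < F i y" by (simp add: less_cSUP_iff)
  qed
  then obtain ys where ys: "\<forall>i\<in>I. (SUP y. F i y) - d < F i (ys i)" by (auto dest: bchoice)
  have "(\<Sum>i\<in>I. p i * (SUP y. F i y)) \<le> (\<Sum>i\<in>I. p i * (F i (ys i) + d))"
    using ys assms(2) by (intro sum_mono mult_left_mono) (auto intro: less_imp_le)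
  also have "\<dots> = (\<Sum>i\<in>I. p i * F i (ys i)) + sum p I * d"
    unfolding distrib_left sum.distrib sum_distrib_right ..
  finally show "(\<Sum>i\<in>I. p i * (SUP y. F i y)) \<le> c + e"
    using bound[of ys] \<open>sum p I * d \<le> e\<close> by linarith
qed

section \<open>Strong duality\<close>

context sym_dro
begin

lemma U_sym_eq:
  "U_sym nrm M N \<rho> np p xi (loss N H) = (SUP P\<in>ot_ball nrm M (real M * \<rho>) nominal. ereal (\<integral>x. sym_loss M N H x \<partial>P))"
  unfolding U_sym_def sym_loss_def ..

lemma pushforward_in_ot_ball:
  assumes X: "\<And>i. X i \<in> blocks M"
    and cost: "(\<Sum>i\<in>Ihat M np. tuple_prob i * costM nrm M (X i) (atom i)) \<le> real M * \<rho>"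
  shows "distr index_measure (blockspace M) X \<in> ot_ball nrm M (real M * \<rho>) nominal"
proof -
  define P where "P = distr index_measure (blockspace M) X"
  define C where "C = distr index_measure (blockspace M \<Otimes>\<^sub>M blockspace M) (\<lambda>i. (X i, atom i))"
  have X_meas: "X \<in> index_measure \<rightarrow>\<^sub>M blockspace M"
    using X by (intro measurable_index_measure) (simp add: space_blockspace)
  have XA_meas: "(\<lambda>i. (X i, atom i)) \<in> index_measure \<rightarrow>\<^sub>M blockspace M \<Otimes>\<^sub>M blockspace M"
    using X atom_in_blocks by (intro measurable_index_measure) (simp add: space_blockspace space_pair_measure)
  have sum_ennreal_eq: "(\<Sum>i\<in>Ihat M np. ennreal (tuple_prob i) * ennreal (f i)) = ennreal (\<Sum>i\<in>Ihat M np. tuple_prob i * f i)"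
    if "\<And>i. 0 \<le> f i" for f
    using tuple_prob_nonneg that by (subst sum_ennreal[symmetric]) (auto simp: ennreal_mult'' intro!: sum.cong)
  have "(\<integral>\<^sup>+ y. ennreal (\<Sum>j<M. norm (y j)) \<partial>P) = (\<integral>\<^sup>+ i. ennreal (\<Sum>j<M. norm (X i j)) \<partial>index_measure)"
    unfolding P_def using measurable_compose[OF block_norm_sum_measurable measurable_ennreal]
    by (subst nn_integral_distr[OF X_meas]) simp_all
  also have "\<dots> < \<infinity>"
    unfolding nn_integral_index_measure by (simp add: sum_ennreal_eq sum_nonneg)
  finally have fmp: "P \<in> finite_first_moment_probs M"
    unfolding finite_first_moment_probs_def P_def
    using prob_space.prob_space_distr[OF prob_space_index_measure X_meas] by simp
  have "C \<in> couplings M P nominal"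
    unfolding couplings_def C_def P_def nominal_eq_distr
    using prob_space.prob_space_distr[OF prob_space_index_measure XA_meas]
    by (simp add: distr_distr[OF measurable_fst XA_meas] distr_distr[OF measurable_snd XA_meas] o_def)
  then have "ot_cost nrm M P nominal \<le> (\<integral>\<^sup>+ z. ennreal (costM nrm M (fst z) (snd z)) \<partial>C)"
    unfolding ot_cost_def by (rule INF_lower)
  also have "\<dots> = (\<integral>\<^sup>+ i. ennreal (costM nrm M (X i) (atom i)) \<partial>index_measure)"
    unfolding C_def using costM_measurable
    by (subst nn_integral_distr[OF XA_meas]) (simp_all add: measurable_compose[OF _ measurable_ennreal])
  also have "\<dots> = ennreal (\<Sum>i\<in>Ihat M np. tuple_prob i * costM nrm M (X i) (atom i))"
    unfolding nn_integral_index_measure by (simp add: sum_ennreal_eq costM_nonneg)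
  also have "\<dots> \<le> ennreal (real M * \<rho>)" using cost by (rule ennreal_leI)
  finally show ?thesis using fmp unfolding ot_ball_def P_def by simp
qed

lemma expected_sym_loss_le_U_sym:
  assumes X: "\<And>i. X i \<in> blocks M"
    and cost: "(\<Sum>i\<in>Ihat M np. tuple_prob i * costM nrm M (X i) (atom i)) \<le> real M * \<rho>"
  shows "ereal (\<Sum>i\<in>Ihat M np. tuple_prob i * sym_loss M N H (X i)) \<le> U_sym nrm M N \<rho> np p xi (loss N H)"
proof -
  have X_meas: "X \<in> index_measure \<rightarrow>\<^sub>M blockspace M"
    using X by (intro measurable_index_measure) (simp add: space_blockspace)
  have "(\<Sum>i\<in>Ihat M np. tuple_prob i * sym_loss M N H (X i))
      = (\<integral>y. sym_loss M N H y \<partial>distr index_measure (blockspace M) X)"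
    by (simp add: integral_distr[OF X_meas sym_loss_measurable] integral_index_measure)
  then show ?thesis
    unfolding U_sym_eq
    using SUP_upper[OF pushforward_in_ot_ball[OF X cost], of "\<lambda>P. ereal (\<integral>x. sym_loss M N H x \<partial>P)"] by simp
qed

text \<open>
  Every member of a class receives the configuration of its class, permuted along the alignment
  with the representative \<open>\<upsilon> \<iota>\<close>; this leaves both its symmetrized loss and its cost unchanged.\<close>

lemma class_configuration_le_U_sym:
  assumes cost: "(\<Sum>\<iota>\<in>Icls M np. p_cls M p \<iota> * costM nrm M (x \<iota>) (atom (\<upsilon> \<iota>))) \<le> real M * \<rho>"
  shows "ereal (\<Sum>\<iota>\<in>Icls M np. p_cls M p \<iota> * sym_loss M N H (x \<iota>)) \<le> U_sym nrm M N \<rho> np p xi (loss N H)"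
proof -
  have "\<exists>\<pi>. \<pi> permutes {..<M} \<and> (\<forall>k<M. i k = \<upsilon> (class_of M np i) (\<pi> k))" if "i \<in> Ihat M np" for i
    using permutation_within_class[OF class_of_in_Icls[OF that] class_of_self[OF that]] \<upsilon>
      class_of_in_Icls[OF that] by blast
  then obtain align where align: "\<And>i. i \<in> Ihat M np \<Longrightarrow> align i permutes {..<M}
      \<and> (\<forall>k<M. i k = \<upsilon> (class_of M np i) (align i k))"
    by metis
  define X where "X i = restrict (\<lambda>k. x (class_of M np i) (align i k)) {..<M}" for i
  have X_blocks: "X i \<in> blocks M" for i unfolding X_def blocks_def by simp
  have sym_loss_X: "sym_loss M N H (X i) = sym_loss M N H (x (class_of M np i))" if "i \<in> Ihat M np" for i
  proof -
    have "sym_loss M N H (X i) = sym_loss M N H (\<lambda>k. x (class_of M np i) (align i k))"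
      by (rule sym_loss_cong) (simp add: X_def)
    also have "\<dots> = sym_loss M N H (x (class_of M np i))"
      using align[OF that] by (intro sym_loss_permute) blast
    finally show ?thesis .
  qed
  have cost_X: "costM nrm M (X i) (atom i) = costM nrm M (x (class_of M np i)) (atom (\<upsilon> (class_of M np i)))"
    if "i \<in> Ihat M np" for i
  proof -
    have "costM nrm M (X i) (atom i)
        = costM nrm M (\<lambda>k. x (class_of M np i) (align i k)) (\<lambda>k. atom (\<upsilon> (class_of M np i)) (align i k))"
      unfolding costM_def X_def xi_tuple_def
      using align[OF that] permutes_in_image[of "align i" "{..<M}"] by (intro sum.cong refl) auto
    also have "\<dots> = costM nrm M (x (class_of M np i)) (atom (\<upsilon> (class_of M np i)))"
      using align[OF that] by (intro costM_permute) blast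
    finally show ?thesis .
  qed
  have "(\<Sum>i\<in>Ihat M np. tuple_prob i * costM nrm M (X i) (atom i)) \<le> real M * \<rho>"
    using cost sum_tuple_prob_regroup[of "\<lambda>\<iota>. costM nrm M (x \<iota>) (atom (\<upsilon> \<iota>))"] by (simp add: cost_X)
  then have "ereal (\<Sum>i\<in>Ihat M np. tuple_prob i * sym_loss M N H (X i)) \<le> U_sym nrm M N \<rho> np p xi (loss N H)"
    by (rule expected_sym_loss_le_U_sym[OF X_blocks])
  then show ?thesis
    using sum_tuple_prob_regroup[of "\<lambda>\<iota>. sym_loss M N H (x \<iota>)"] by (simp add: sym_loss_X)
qed

end

definition stochastic_weights :: "'l set \<Rightarrow> 'v set \<Rightarrow> ('l \<times> 'v \<Rightarrow> real) set" where
  "stochastic_weights L V = {w. (\<forall>q. 0 \<le> w q \<and> w q \<le> 1) \<and> (\<forall>l\<in>L. (\<Sum>v\<in>V. w (l, v)) = 1)}"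

lemma compact_stochastic_weights:
  fixes L :: "'l set" and V :: "'v set"
  shows "compact (stochastic_weights L V)"
proof -
  have "compactin (product_topology (\<lambda>_. euclidean) UNIV) (PiE UNIV (\<lambda>_ :: 'l \<times> 'v. {0..1::real}))"
    by (subst compactin_PiE) auto
  then have "compact (Pi UNIV (\<lambda>_ :: 'l \<times> 'v. {0..1::real}))"
    by (simp add: euclidean_product_topology PiE_UNIV_domain compactin_euclidean_iff)
  moreover have "closed (\<Inter>l\<in>L. {w :: 'l \<times> 'v \<Rightarrow> real. (\<Sum>v\<in>V. w (l, v)) = 1})"
    by (intro closed_INT ballI closed_Collect_eq continuous_intros continuous_on_product_coordinates)
  moreover have "stochastic_weights L V = Pi UNIV (\<lambda>_. {0..1}) \<inter> (\<Inter>l\<in>L. {w. (\<Sum>v\<in>V. w (l, v)) = 1})"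
    unfolding stochastic_weights_def by auto
  ultimately show ?thesis by (simp add: compact_Int_closed)
qed

lemma comb_closed_stochastic_weights:
  fixes L :: "'l set" and V :: "'v set"
  shows "comb_closed convex_comb (stochastic_weights L V)"
  unfolding comb_closed_def stochastic_weights_def
proof (intro ballI CollectI conjI allI)
  fix a b :: "'l \<times> 'v \<Rightarrow> real" and t :: real and q l
  assume a: "a \<in> {w. (\<forall>q. 0 \<le> w q \<and> w q \<le> 1) \<and> (\<forall>l\<in>L. (\<Sum>v\<in>V. w (l, v)) = 1)}"
    and b: "b \<in> {w. (\<forall>q. 0 \<le> w q \<and> w q \<le> 1) \<and> (\<forall>l\<in>L. (\<Sum>v\<in>V. w (l, v)) = 1)}"
    and t: "t \<in> {0..1}"
  have "0 \<le> a q" "a q \<le> 1" "0 \<le> b q" "b q \<le> 1" using a b by blast+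
  then show "0 \<le> convex_comb t a b q" "convex_comb t a b q \<le> 1"
    using t convex_comb_le_max[of t "a q" "b q"] unfolding convex_comb_def by auto
  show "l \<in> L \<Longrightarrow> (\<Sum>v\<in>V. convex_comb t a b (l, v)) = 1"
    using a b unfolding convex_comb_def by (simp add: sum.distrib sum_distrib_left[symmetric])
qed

lemma sum_convex_comb:
  fixes c f g :: "'a \<Rightarrow> real"
  shows "(\<Sum>i\<in>A. c i * ((1 - t) * f i + t * g i)) = (1 - t) * (\<Sum>i\<in>A. c i * f i) + t * (\<Sum>i\<in>A. c i * g i)"
  by (simp add: algebra_simps sum.distrib sum_subtractf sum_distrib_left)

lemma sum_sum_convex_comb:
  fixes c f g :: "'a \<Rightarrow> 'b \<Rightarrow> real"
  shows "(\<Sum>l\<in>A. \<Sum>v\<in>B. c l v * ((1 - t) * f l v + t * g l v))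
       = (1 - t) * (\<Sum>l\<in>A. \<Sum>v\<in>B. c l v * f l v) + t * (\<Sum>l\<in>A. \<Sum>v\<in>B. c l v * g l v)"
  by (simp add: algebra_simps sum.distrib sum_subtractf sum_distrib_left)

lemma continuous_on_convex_comb: "continuous_on S (\<lambda>t. convex_comb t a (b :: 'i \<Rightarrow> real))"
  unfolding convex_comb_def by (intro continuous_on_coordinatewise_then_product continuous_intros)

context sym_dro
begin

text \<open>
  For fixed \<open>\<mu>\<close> and atom \<open>\<xi>\<close>, the function \<open>y \<mapsto> sym_loss (\<xi> + y) - \<mu> \<Sum>\<^sub>j \<parallel>y\<^sub>j\<parallel>\<close> is the
  minimum over vertex weights of the following function, which is affine in the weights and
  concave in \<open>y\<close>.\<close>

definition weighted_lagrangian ::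
    "(nat \<Rightarrow> real^'n) \<Rightarrow> real \<Rightarrow> ((nat \<Rightarrow> nat) \<times> ((nat \<Rightarrow> real^'n) \<times> real) \<Rightarrow> real) \<Rightarrow> (nat \<Rightarrow> real^'n) \<Rightarrow> real" where
  "weighted_lagrangian \<xi> \<mu> wt y =
     \<kappa> * (\<Sum>l\<in>L. \<Sum>v\<in>V. wt (l, v) * affine_value N v (\<lambda>k. \<xi> (l k) + y (l k))) - \<mu> * (\<Sum>j<M. nrm (y j))"

lemma weighted_lagrangian_affine_weights:
  "weighted_lagrangian \<xi> \<mu> (convex_comb t a b) y = (1 - t) * weighted_lagrangian \<xi> \<mu> a y + t * weighted_lagrangian \<xi> \<mu> b y"
proof -
  let ?g = "\<lambda>l v. affine_value N v (\<lambda>k. \<xi> (l k) + y (l k))"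
  have eq: "(\<Sum>l\<in>L. \<Sum>v\<in>V. convex_comb t a b (l, v) * ?g l v)
      = (1 - t) * (\<Sum>l\<in>L. \<Sum>v\<in>V. a (l, v) * ?g l v) + t * (\<Sum>l\<in>L. \<Sum>v\<in>V. b (l, v) * ?g l v)"
    using sum_sum_convex_comb[of ?g t "\<lambda>l v. a (l, v)" "\<lambda>l v. b (l, v)" V L]
    unfolding convex_comb_def by (simp add: mult.commute)
  show ?thesis unfolding weighted_lagrangian_def eq by (simp only: algebra_simps)
qed

lemma weighted_lagrangian_concave:
  assumes "0 \<le> \<mu>" "0 \<le> t" "t \<le> 1"
  shows "(1 - t) * weighted_lagrangian \<xi> \<mu> wt y1 + t * weighted_lagrangian \<xi> \<mu> wt y2
       \<le> weighted_lagrangian \<xi> \<mu> wt (convex_comb t y1 y2)"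
proof -
  let ?A = "\<lambda>y. \<Sum>l\<in>L. \<Sum>v\<in>V. wt (l, v) * affine_value N v (\<lambda>k. \<xi> (l k) + y (l k))"
  have shift: "(\<lambda>k. \<xi> (l k) + convex_comb t y1 y2 (l k))
      = convex_comb t (\<lambda>k. \<xi> (l k) + y1 (l k)) (\<lambda>k. \<xi> (l k) + y2 (l k))" for l
    unfolding convex_comb_def by (simp add: fun_eq_iff algebra_simps)
  have A: "?A (convex_comb t y1 y2) = (1 - t) * ?A y1 + t * ?A y2"
    by (simp only: shift affine_value_convex_comb sum_sum_convex_comb)
  have "(\<Sum>j<M. nrm (convex_comb t y1 y2 j)) \<le> (1 - t) * (\<Sum>j<M. nrm (y1 j)) + t * (\<Sum>j<M. nrm (y2 j))"
    unfolding convex_comb_def using norm_convex_comb[OF nrm assms(2,3)]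
    by (simp add: sum_mono sum.distrib[symmetric] sum_distrib_left)
  then have "\<mu> * (\<Sum>j<M. nrm (convex_comb t y1 y2 j))
      \<le> \<mu> * ((1 - t) * (\<Sum>j<M. nrm (y1 j)) + t * (\<Sum>j<M. nrm (y2 j)))"
    using \<open>0 \<le> \<mu>\<close> by (rule mult_left_mono)
  moreover have "(1 - t) * weighted_lagrangian \<xi> \<mu> wt y1 + t * weighted_lagrangian \<xi> \<mu> wt y2
      = \<kappa> * ((1 - t) * ?A y1 + t * ?A y2) - \<mu> * ((1 - t) * (\<Sum>j<M. nrm (y1 j)) + t * (\<Sum>j<M. nrm (y2 j)))"
    unfolding weighted_lagrangian_def by (simp only: algebra_simps)
  ultimately show ?thesis unfolding weighted_lagrangian_def A by linarith
qed

lemma vertex_selection_weights: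
  "\<exists>wt\<in>stochastic_weights L V. weighted_lagrangian \<xi> \<mu> wt y
     = sym_loss M N H (\<lambda>j. \<xi> j + y j) - \<mu> * costM nrm M (\<lambda>j. \<xi> j + y j) \<xi>"
proof -
  define Y :: "(nat \<Rightarrow> nat) \<Rightarrow> nat \<Rightarrow> real^'n" where "Y l = (\<lambda>k. \<xi> (l k) + y (l k))" for l
  have "\<forall>l. \<exists>v. v \<in> V \<and> loss N H (Y l) = affine_value N v (Y l)"
    using loss_attained_at_vertex[OF V HV] by blast
  from choice[OF this] obtain vs where vs: "\<forall>l. vs l \<in> V \<and> loss N H (Y l) = affine_value N (vs l) (Y l)" ..
  define wt where "wt q = (if fst q \<in> L \<and> snd q = vs (fst q) then 1 else (0::real))" for q
  have "wt \<in> stochastic_weights L V"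
    unfolding stochastic_weights_def wt_def using vs V(1) by (auto simp: sum.delta' if_distrib cong: if_cong)
  moreover have "(\<Sum>v\<in>V. wt (l, v) * affine_value N v (Y l)) = loss N H (Y l)" if "l \<in> L" for l
  proof -
    have "(\<Sum>v\<in>V. wt (l, v) * affine_value N v (Y l)) = (\<Sum>v\<in>V. if v = vs l then affine_value N v (Y l) else 0)"
      using that unfolding wt_def by (intro sum.cong) auto
    then show ?thesis using vs[rule_format, of l] V(1) by (simp add: sum.delta')
  qed
  ultimately show ?thesis
    unfolding weighted_lagrangian_def sym_loss_eq costM_def Y_def by (intro bexI[of _ wt]) simp_all
qed

lemma sion_weights:
  assumes "0 \<le> \<mu>" and bound: "\<forall>y. sym_loss M N H y - \<mu> * costM nrm M y \<xi> \<le> \<psi>"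
  shows "\<exists>wt\<in>stochastic_weights L V. \<forall>y. weighted_lagrangian \<xi> \<mu> wt y \<le> \<psi>"
proof -
  interpret sion_minimax convex_comb convex_comb "weighted_lagrangian \<xi> \<mu>"
  proof
    show "continuous_on {0..1} (\<lambda>t. convex_comb t a b)" for a b :: "(nat \<Rightarrow> nat) \<times> ((nat \<Rightarrow> real^'n) \<times> real) \<Rightarrow> real"
      by (rule continuous_on_convex_comb)
    show "continuous_on UNIV (\<lambda>wt. weighted_lagrangian \<xi> \<mu> wt y)" for y
      unfolding weighted_lagrangian_def by (intro continuous_intros continuous_on_product_coordinates)
    show "continuous_on {0..1} (\<lambda>t. weighted_lagrangian \<xi> \<mu> wt (convex_comb t y1 y2))" for wt y1 y2
      unfolding weighted_lagrangian_def convex_comb_def affine_value_def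
      by (intro continuous_intros continuous_on_norm_comp[OF nrm])
    show "weighted_lagrangian \<xi> \<mu> (convex_comb t a b) y \<le> max (weighted_lagrangian \<xi> \<mu> a y) (weighted_lagrangian \<xi> \<mu> b y)"
      if "t \<in> {0..1}" for y a b t
      using that unfolding weighted_lagrangian_affine_weights by (intro convex_comb_le_max) auto
    show "min (weighted_lagrangian \<xi> \<mu> wt y1) (weighted_lagrangian \<xi> \<mu> wt y2)
        \<le> weighted_lagrangian \<xi> \<mu> wt (convex_comb t y1 y2)" if "t \<in> {0..1}" for wt y1 y2 t
      using that min_le_convex_comb weighted_lagrangian_concave[OF \<open>0 \<le> \<mu>\<close>] by (meson atLeastAtMost_iff order.trans)
  qed simp_all
  have "\<forall>y. \<exists>wt\<in>stochastic_weights L V. weighted_lagrangian \<xi> \<mu> wt y \<le> \<psi>"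
  proof
    fix y
    obtain wt where "wt \<in> stochastic_weights L V" and wt: "weighted_lagrangian \<xi> \<mu> wt y
        = sym_loss M N H (\<lambda>j. \<xi> j + y j) - \<mu> * costM nrm M (\<lambda>j. \<xi> j + y j) \<xi>"
      using vertex_selection_weights by blast
    moreover have "sym_loss M N H (\<lambda>j. \<xi> j + y j) - \<mu> * costM nrm M (\<lambda>j. \<xi> j + y j) \<xi> \<le> \<psi>"
      using bound by blast
    ultimately show "\<exists>wt\<in>stochastic_weights L V. weighted_lagrangian \<xi> \<mu> wt y \<le> \<psi>"
      by (intro bexI[of _ wt]) simp_all
  qed
  then show ?thesis by (rule sion[OF compact_stochastic_weights comb_closed_stochastic_weights])
qed

end

context sym_dro
begin

definition "dual_a wt l = (\<lambda>k. - fst (hull_point N V (\<lambda>v. wt (l, v))) k)"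
definition "dual_b wt l = - snd (hull_point N V (\<lambda>v. wt (l, v)))"
definition "dual_z wt = (\<lambda>j. if j < M then \<kappa> *\<^sub>R (\<Sum>l\<in>L. selT M N l (dual_a wt l) j) else undefined)"

lemma dual_ab_in_polytope:
  assumes "wt \<in> stochastic_weights L V" "l \<in> L"
  shows "((\<lambda>k. if k < N then - dual_a wt l k else undefined), - dual_b wt l) \<in> H"
proof -
  have "((\<lambda>k. if k < N then - dual_a wt l k else undefined), - dual_b wt l) = hull_point N V (\<lambda>v. wt (l, v))"
    unfolding dual_a_def dual_b_def hull_point_def by (simp add: fun_eq_iff)
  then show ?thesis
    using assms unfolding stochastic_weights_def by (auto intro!: hull_point_in_polytope[OF V HV])
qed

lemma weighted_lagrangian_eq_dual:
  assumes "wt \<in> stochastic_weights L V"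
  shows "weighted_lagrangian \<xi> \<mu> wt y
       = - (\<Sum>j<M. dual_z wt j \<bullet> \<xi> j) - \<kappa> * (\<Sum>l\<in>L. dual_b wt l) - (\<Sum>j<M. dual_z wt j \<bullet> y j)
         - \<mu> * (\<Sum>j<M. nrm (y j))"
proof -
  have per_l: "(\<Sum>v\<in>V. wt (l, v) * affine_value N v (\<lambda>k. \<xi> (l k) + y (l k)))
      = - (\<Sum>k<N. dual_a wt l k \<bullet> \<xi> (l k)) - (\<Sum>k<N. dual_a wt l k \<bullet> y (l k)) - dual_b wt l" if "l \<in> L" for l
  proof -
    have "(\<Sum>v\<in>V. wt (l, v)) = 1" using assms that unfolding stochastic_weights_def by blast
    then have "(\<Sum>v\<in>V. wt (l, v) * affine_value N v (\<lambda>k. \<xi> (l k) + y (l k)))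
        = affine_value N (hull_point N V (\<lambda>v. wt (l, v))) (\<lambda>k. \<xi> (l k) + y (l k))"
      by (simp add: affine_value_hull_point[OF V(1)])
    then show ?thesis
      unfolding affine_value_def dual_a_def dual_b_def by (simp add: inner_add_right sum.distrib sum_negf)
  qed
  have sum_eq: "(\<Sum>l\<in>L. \<Sum>v\<in>V. wt (l, v) * affine_value N v (\<lambda>k. \<xi> (l k) + y (l k)))
      = (\<Sum>l\<in>L. - (\<Sum>k<N. dual_a wt l k \<bullet> \<xi> (l k)) - (\<Sum>k<N. dual_a wt l k \<bullet> y (l k)) - dual_b wt l)"
    by (rule sum.cong[OF refl per_l])
  show ?thesis
    unfolding weighted_lagrangian_def inner_sum_selT[OF dual_z_def] sum_eq
    by (simp add: sum_subtractf sum_negf sum.distrib algebra_simps)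
qed

lemma class_dual_of_bound:
  assumes "0 \<le> \<mu>" and bound: "\<forall>y. sym_loss M N H y - \<mu> * costM nrm M y \<xi> \<le> \<psi>"
  shows "\<exists>\<sigma>0 z a b. \<sigma>0 \<le> \<psi> \<and> class_feasible \<mu> \<xi> \<sigma>0 z a b"
proof -
  obtain wt where wt: "wt \<in> stochastic_weights L V" and wt_bound: "\<And>y. weighted_lagrangian \<xi> \<mu> wt y \<le> \<psi>"
    using sion_weights[OF assms] by blast
  define \<sigma>0 where "\<sigma>0 = - (\<Sum>j<M. dual_z wt j \<bullet> \<xi> j) - \<kappa> * (\<Sum>l\<in>L. dual_b wt l)"
  have lagrangian: "\<sigma>0 - (\<Sum>j<M. dual_z wt j \<bullet> y j) - \<mu> * (\<Sum>j<M. nrm (y j)) \<le> \<psi>" for y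
    using wt_bound[of y] unfolding weighted_lagrangian_eq_dual[OF wt] \<sigma>0_def .
  have "\<sigma>0 \<le> \<psi>" using lagrangian[of "\<lambda>_. 0"] by (simp add: norm_zero[OF nrm])
  moreover have "class_feasible \<mu> \<xi> \<sigma>0 (dual_z wt) (dual_a wt) (dual_b wt)"
    unfolding class_feasible_def
    using dual_norm_le_of_bound[OF nrm \<open>0 \<le> \<mu>\<close> _ lagrangian] dual_ab_in_polytope[OF wt]
    by (simp add: \<sigma>0_def dual_z_def)
  ultimately show ?thesis by blast
qed

lemma U_sym_le_dual_values: "U_sym nrm M N \<rho> np p xi (loss N H) \<le> Inf (dual_values nrm M N \<rho> np p xi H \<upsilon>)"
proof (rule Inf_greatest)
  fix d assume "d \<in> dual_values nrm M N \<rho> np p xi H \<upsilon>"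
  then obtain \<mu> \<sigma> z a b where d: "d = ereal (\<mu> * real M * \<rho> + (\<Sum>\<iota>\<in>Icls M np. p_cls M p \<iota> * \<sigma> \<iota>))"
    and "0 \<le> \<mu>" and feas: "\<forall>\<iota>\<in>Icls M np. class_feasible \<mu> (atom (\<upsilon> \<iota>)) (\<sigma> \<iota>) (z \<iota>) (\<lambda>l. a l \<iota>) (\<lambda>l. b l \<iota>)"
    unfolding dual_values_eq by blast
  have "sym_loss M N H x \<le> \<mu> * costM nrm M x (atom i) + \<sigma> (class_of M np i)" if "i \<in> Ihat M np" for i x
    using feas class_of_in_Icls[OF that]
    by (intro sym_loss_le_of_class_feasible_member[OF class_of_in_Icls[OF that] class_of_self[OF that]]) blast
  then have "(\<integral>x. sym_loss M N H x \<partial>P) \<le> \<mu> * real M * \<rho> + (\<Sum>\<iota>\<in>Icls M np. p_cls M p \<iota> * \<sigma> \<iota>)"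
    if "P \<in> ot_ball nrm M (real M * \<rho>) nominal" for P
    by (rule weak_duality[OF that \<open>0 \<le> \<mu>\<close>])
  then show "U_sym nrm M N \<rho> np p xi (loss N H) \<le> d"
    unfolding U_sym_eq d by (intro SUP_least) simp
qed

lemma sym_loss_concave:
  assumes "0 \<le> t" "t \<le> 1"
  shows "(1 - t) * sym_loss M N H y1 + t * sym_loss M N H y2 \<le> sym_loss M N H (convex_comb t y1 y2)"
proof -
  have "(1 - t) * sym_loss M N H y1 + t * sym_loss M N H y2
      = \<kappa> * ((1 - t) * (\<Sum>l\<in>L. loss N H (\<lambda>k. y1 (l k))) + t * (\<Sum>l\<in>L. loss N H (\<lambda>k. y2 (l k))))"
    unfolding sym_loss_eq by (simp add: algebra_simps)
  also have "\<dots> = \<kappa> * (\<Sum>l\<in>L. (1 - t) * loss N H (\<lambda>k. y1 (l k)) + t * loss N H (\<lambda>k. y2 (l k)))"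
    by (simp add: sum.distrib sum_distrib_left)
  also have "\<dots> \<le> \<kappa> * (\<Sum>l\<in>L. loss N H (\<lambda>k. convex_comb t y1 y2 (l k)))"
    using loss_concave[OF V HV assms] unfolding convex_comb_def
    by (intro mult_left_mono sum_mono) auto
  also have "\<dots> = sym_loss M N H (convex_comb t y1 y2)"
    unfolding sym_loss_eq ..
  finally show ?thesis .
qed

lemma costM_convex:
  assumes "0 \<le> t" "t \<le> 1"
  shows "costM nrm M (convex_comb t y1 y2) \<xi> \<le> (1 - t) * costM nrm M y1 \<xi> + t * costM nrm M y2 \<xi>"
proof -
  have "convex_comb t y1 y2 j - \<xi> j = (1 - t) *\<^sub>R (y1 j - \<xi> j) + t *\<^sub>R (y2 j - \<xi> j)" for j
    unfolding convex_comb_def by (simp add: algebra_simps)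
  then have "nrm (convex_comb t y1 y2 j - \<xi> j) \<le> (1 - t) * nrm (y1 j - \<xi> j) + t * nrm (y2 j - \<xi> j)" for j
    using norm_convex_comb[OF nrm assms] by simp
  then show ?thesis
    unfolding costM_def by (simp add: sum_distrib_left sum.distrib[symmetric] sum_mono)
qed

definition "expected_sym_loss x = (\<Sum>\<iota>\<in>Icls M np. p_cls M p \<iota> * sym_loss M N H (x \<iota>))"
definition "expected_cost x = (\<Sum>\<iota>\<in>Icls M np. p_cls M p \<iota> * costM nrm M (x \<iota>) (atom (\<upsilon> \<iota>)))"

lemma expected_cost_atoms: "expected_cost (\<lambda>\<iota>. atom (\<upsilon> \<iota>)) = 0"
  unfolding expected_cost_def costM_def by (simp add: norm_zero[OF nrm])

lemma expected_sym_loss_concave: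
  assumes "t \<in> {0..1}"
  shows "(1 - t) * expected_sym_loss x1 + t * expected_sym_loss x2
       \<le> expected_sym_loss (\<lambda>\<iota>. convex_comb t (x1 \<iota>) (x2 \<iota>))"
proof -
  have "(1 - t) * expected_sym_loss x1 + t * expected_sym_loss x2
      = (\<Sum>\<iota>\<in>Icls M np. p_cls M p \<iota> * ((1 - t) * sym_loss M N H (x1 \<iota>) + t * sym_loss M N H (x2 \<iota>)))"
    unfolding expected_sym_loss_def by (rule sum_convex_comb[symmetric])
  also have "\<dots> \<le> expected_sym_loss (\<lambda>\<iota>. convex_comb t (x1 \<iota>) (x2 \<iota>))"
    unfolding expected_sym_loss_def using assms
    by (intro sum_mono mult_left_mono sym_loss_concave p_cls_nonneg) auto
  finally show ?thesis .
qed

lemma expected_cost_convex: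
  assumes "t \<in> {0..1}"
  shows "expected_cost (\<lambda>\<iota>. convex_comb t (x1 \<iota>) (x2 \<iota>)) \<le> (1 - t) * expected_cost x1 + t * expected_cost x2"
proof -
  have "expected_cost (\<lambda>\<iota>. convex_comb t (x1 \<iota>) (x2 \<iota>))
      \<le> (\<Sum>\<iota>\<in>Icls M np. p_cls M p \<iota> * ((1 - t) * costM nrm M (x1 \<iota>) (atom (\<upsilon> \<iota>)) + t * costM nrm M (x2 \<iota>) (atom (\<upsilon> \<iota>))))"
    unfolding expected_cost_def using assms
    by (intro sum_mono mult_left_mono costM_convex p_cls_nonneg) auto
  also have "\<dots> = (1 - t) * expected_cost x1 + t * expected_cost x2"
    unfolding expected_cost_def by (rule sum_convex_comb)
  finally show ?thesis .
qed

lemma Inf_dual_values_le_class_bounds: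
  assumes "0 \<le> \<mu>"
    and class_bound: "\<And>\<iota> y. \<iota> \<in> Icls M np \<Longrightarrow> sym_loss M N H y - \<mu> * costM nrm M y (atom (\<upsilon> \<iota>)) \<le> \<psi> \<iota>"
  shows "Inf (dual_values nrm M N \<rho> np p xi H \<upsilon>) \<le> ereal (\<mu> * real M * \<rho> + (\<Sum>\<iota>\<in>Icls M np. p_cls M p \<iota> * \<psi> \<iota>))"
proof -
  have "\<forall>\<iota>\<in>Icls M np. \<exists>d. fst d \<le> \<psi> \<iota>
      \<and> class_feasible \<mu> (atom (\<upsilon> \<iota>)) (fst d) (fst (snd d)) (fst (snd (snd d))) (snd (snd (snd d)))"
  proof
    fix \<iota> assume "\<iota> \<in> Icls M np"
    then obtain \<sigma>0 z a b where "\<sigma>0 \<le> \<psi> \<iota>" "class_feasible \<mu> (atom (\<upsilon> \<iota>)) \<sigma>0 z a b"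
      using class_dual_of_bound[OF \<open>0 \<le> \<mu>\<close>] class_bound by blast
    then show "\<exists>d. fst d \<le> \<psi> \<iota>
        \<and> class_feasible \<mu> (atom (\<upsilon> \<iota>)) (fst d) (fst (snd d)) (fst (snd (snd d))) (snd (snd (snd d)))"
      by (intro exI[of _ "(\<sigma>0, z, a, b)"]) simp
  qed
  from bchoice[OF this] obtain d where d: "\<forall>\<iota>\<in>Icls M np. fst (d \<iota>) \<le> \<psi> \<iota>
      \<and> class_feasible \<mu> (atom (\<upsilon> \<iota>)) (fst (d \<iota>)) (fst (snd (d \<iota>))) (fst (snd (snd (d \<iota>)))) (snd (snd (snd (d \<iota>))))" ..
  have "ereal (\<mu> * real M * \<rho> + (\<Sum>\<iota>\<in>Icls M np. p_cls M p \<iota> * fst (d \<iota>))) \<in> dual_values nrm M N \<rho> np p xi H \<upsilon>"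
    unfolding dual_values_eq using \<open>0 \<le> \<mu>\<close> d
    by (intro CollectI exI[of _ \<mu>] exI[of _ "\<lambda>\<iota>. fst (d \<iota>)"] exI[of _ "\<lambda>\<iota>. fst (snd (d \<iota>))"]
        exI[of _ "\<lambda>l \<iota>. fst (snd (snd (d \<iota>))) l"] exI[of _ "\<lambda>l \<iota>. snd (snd (snd (d \<iota>))) l"]) auto
  then have "Inf (dual_values nrm M N \<rho> np p xi H \<upsilon>) \<le> ereal (\<mu> * real M * \<rho> + (\<Sum>\<iota>\<in>Icls M np. p_cls M p \<iota> * fst (d \<iota>)))"
    by (rule Inf_lower)
  also have "(\<Sum>\<iota>\<in>Icls M np. p_cls M p \<iota> * fst (d \<iota>)) \<le> (\<Sum>\<iota>\<in>Icls M np. p_cls M p \<iota> * \<psi> \<iota>)"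
    using d by (intro sum_mono mult_left_mono p_cls_nonneg) auto
  finally show ?thesis by simp
qed

lemma Inf_dual_values_le:
  assumes bound: "\<And>x. expected_cost x \<le> real M * \<rho> \<Longrightarrow> expected_sym_loss x < c"
  shows "Inf (dual_values nrm M N \<rho> np p xi H \<upsilon>) \<le> ereal c"
proof -
  have "expected_cost (\<lambda>\<iota>. atom (\<upsilon> \<iota>)) < real M * \<rho>"
    using N1 NM rho by (simp add: expected_cost_atoms)
  then obtain \<mu> where "0 \<le> \<mu>"
    and lagrange: "\<And>x. expected_sym_loss x - \<mu> * expected_cost x \<le> c - \<mu> * (real M * \<rho>)"
    using lagrange_multiplier[where comb = "\<lambda>t x1 x2 \<iota>. convex_comb t (x1 \<iota>) (x2 \<iota>)"
        and \<Phi> = expected_sym_loss and G = expected_cost,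
        OF expected_sym_loss_concave expected_cost_convex _ bound] by blast
  define F where "F \<iota> y = sym_loss M N H y - \<mu> * costM nrm M y (atom (\<upsilon> \<iota>))" for \<iota> y
  have F_sum: "(\<Sum>\<iota>\<in>Icls M np. p_cls M p \<iota> * F \<iota> (x \<iota>)) \<le> c - \<mu> * (real M * \<rho>)" for x
    using lagrange[of x] unfolding F_def expected_sym_loss_def expected_cost_def
    by (simp add: right_diff_distrib sum_subtractf sum_distrib_left algebra_simps)
  have "F \<iota> y \<le> (SUP y. F \<iota> y)" if "\<iota> \<in> Icls M np" for \<iota> y
    using bdd_above_of_weighted_sum_le[where F = F, OF finite_Icls that p_cls_pos[OF p_pos that] F_sum]
    by (rule cSUP_upper[rotated]) simp
  then have "Inf (dual_values nrm M N \<rho> np p xi H \<upsilon>)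
      \<le> ereal (\<mu> * real M * \<rho> + (\<Sum>\<iota>\<in>Icls M np. p_cls M p \<iota> * (SUP y. F \<iota> y)))"
    unfolding F_def by (rule Inf_dual_values_le_class_bounds[OF \<open>0 \<le> \<mu>\<close>])
  also have "(\<Sum>\<iota>\<in>Icls M np. p_cls M p \<iota> * (SUP y. F \<iota> y)) \<le> c - \<mu> * (real M * \<rho>)"
    by (rule weighted_sum_SUP_le[where F = F, OF finite_Icls p_cls_pos[OF p_pos] F_sum])
  finally show ?thesis by simp
qed

lemma dual_values_le_U_sym: "Inf (dual_values nrm M N \<rho> np p xi H \<upsilon>) \<le> U_sym nrm M N \<rho> np p xi (loss N H)"
proof -
  have lower: "ereal (expected_sym_loss x) \<le> U_sym nrm M N \<rho> np p xi (loss N H)"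
    if "expected_cost x \<le> real M * \<rho>" for x
    using class_configuration_le_U_sym[of x] that unfolding expected_sym_loss_def expected_cost_def .
  show ?thesis
  proof (cases "U_sym nrm M N \<rho> np p xi (loss N H)")
    case (real u)
    show ?thesis
    proof (rule ereal_le_epsilon2)
      fix e :: real assume "0 < e"
      have "expected_sym_loss x < u + e" if "expected_cost x \<le> real M * \<rho>" for x
        using lower[OF that] real \<open>0 < e\<close> by simp
      then show "Inf (dual_values nrm M N \<rho> np p xi H \<upsilon>) \<le> U_sym nrm M N \<rho> np p xi (loss N H) + ereal e"
        using Inf_dual_values_le real by simp
    qed
  next
    case MInf
    then show ?thesis
      using lower[of "\<lambda>\<iota>. atom (\<upsilon> \<iota>)"] expected_cost_atoms rho by simp
  qed simp
qed

end

theorem mainTheorem17: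
  fixes nrm :: "real^'n \<Rightarrow> real"
    and M N np :: nat
    and \<rho> :: real
    and p :: "nat \<Rightarrow> real"
    and xi :: "nat \<Rightarrow> real^'n"
    and H :: "((nat \<Rightarrow> real^'n) \<times> real) set"
    and \<upsilon> :: "(nat \<Rightarrow> nat) set \<Rightarrow> (nat \<Rightarrow> nat)"
  assumes "\<rho> > 0"
    and "1 \<le> N" and "N \<le> M"
    and "1 \<le> np" and "\<forall>i\<in>{1..np}. p i > 0" and "(\<Sum>i\<in>{1..np}. p i) = 1"
    and "is_norm nrm"
    and "is_polytope N H"
    and "\<forall>\<iota>\<in>Icls M np. \<upsilon> \<iota> \<in> \<iota>"
  shows "U_sym nrm M N \<rho> np p xi (loss N H) = Inf (dual_values nrm M N \<rho> np p xi H \<upsilon>)"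
proof -
  obtain V where "finite V" "V \<noteq> {}" "V \<subseteq> blocks N \<times> UNIV"
    and "H = {((\<lambda>k. if k < N then (\<Sum>v\<in>V. w v *\<^sub>R fst v k) else undefined),
           (\<Sum>v\<in>V. w v * snd v)) | w. (\<forall>v\<in>V. 0 \<le> w v) \<and> (\<Sum>v\<in>V. w v) = 1}"
    using \<open>is_polytope N H\<close> unfolding is_polytope_def by blast
  then interpret sym_dro nrm M N np \<rho> p xi H \<upsilon> V
    using assms by unfold_locales auto
  show ?thesis by (rule antisym[OF U_sym_le_dual_values dual_values_le_U_sym])
qed

end
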